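(* Let $t,n$ be integers with $n\ge 1$ and $\gcd(t,n)=1$, let $c\in\mathbb C^*$ with $|q|^{1/n}<|c|\le 1$, and let $E:=\mathrm{Res}(E(cz^{t/n}))$, the difference module $\hat K_n e$ with $\Phi e=cz^{t/n}e$ viewed as a difference module over $\hat K$. Then: (1) up to isomorphism, $E$ depends only on $t$, $n$ and $c^n$; (2) $E$ is irreducible, of dimension $n$ over $\hat K$, pure of slope $t/n$, and the algebra of $\hat K$-linear endomorphisms of $E$ commuting with $\Phi$ is $\mathbb C$; (3) every irreducible difference module $I$ over $\hat K$ is isomorphic to $\mathrm{Res}(E(cz^{t/n}))$ for unique $t,n,c^n$ with $n\ge1$, $\gcd(t,n)=1$ and $|q|<|c^n|\le 1$.
   Context: Fix $q\in\mathbb C$ with $0<|q|<1$ and $\tau$ in the upper half plane with $e^{2\pi i\tau}=q$; for $\lambda\in\mathbb Q$ put $q^\lambda:=e^{2\pi i\tau\lambda}$. A difference module over a difference field $(F,\phi)$ is a finite-dimensional $F$-vector space $M$ with an additive bijection $\Phi$ satisfying $\Phi(fm)=\phi(f)\Phi(m)$; morphisms are $F$-linear maps commuting with $\Phi$; irreducible means no $\Phi$-stable subspaces other than $0$ and $M$. $\hat K=\mathbb C((z))$ and $\hat K_n=\hat K(z^{1/n})$ are difference fields via $\phi(z^{\lambda})=q^{\lambda}z^{\lambda}$. For a finite extension $F\subset G$ of difference fields and a difference module $N$ over $G$, $\mathrm{Res}(N)$ is $N$ regarded as a difference module over $F$. Slopes: every difference module $M$ over $\hat K$ is isomorphic to $\hat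 K[\Phi,\Phi^{-1}]/\hat K[\Phi,\Phi^{-1}]L$ (skew Laurent polynomial ring with $\Phi f=\phi(f)\Phi$) for some $L=\Phi^d+a_{d-1}\Phi^{d-1}+\dots+a_0$ with $a_0\ne0$; the Newton polygon of $L$ is the finite part of the boundary of the convex hull of $\bigcup_{i=0}^d\{(i,-\mathrm{ord}_z(a_i)+y)\mid y\le 0\}$ (with $a_d=1$), and $M$ is pure of slope $\lambda$ if this polygon has the single slope $\lambda$. *)

theory Defs
  imports Complex_Main "HOL-Computational_Algebra.Formal_Laurent_Series"
begin

(* q^lambda := exp(2 pi i tau lambda), for rational lambda *)
definition qpow :: "complex \<Rightarrow> rat \<Rightarrow> complex" where
  "qpow \<tau> r = exp (2 * of_real pi * \<i> * \<tau> * of_rat r)"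

(* The field K_n = C((z^{1/n})) is represented by complex fls in the variable w = z^{1/n}
   (so K_1 = K = C((z))).  Its difference automorphism phi(z^(k/n)) = q^(k/n) z^(k/n)
   acts coefficientwise. *)
definition sigma :: "complex \<Rightarrow> nat \<Rightarrow> complex fls \<Rightarrow> complex fls" where
  "sigma \<tau> n f = Abs_fls (\<lambda>k. qpow \<tau> (of_int k / of_nat n) * fls_nth f k)"

abbreviation phiK :: "complex \<Rightarrow> complex fls \<Rightarrow> complex fls" where
  "phiK \<tau> \<equiv> sigma \<tau> 1"

(* the inclusion K \<subseteq> K_n, z \<mapsto> w^n *)
definition emb :: "nat \<Rightarrow> complex fls \<Rightarrow> complex fls" where
  "emb n f = Abs_fls (\<lambda>k. if int n dvd k then fls_nth f (k div int n) else 0)"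

definition diff_module ::
  "('f::field \<Rightarrow> 'f) \<Rightarrow> ('f \<Rightarrow> 'b::ab_group_add \<Rightarrow> 'b) \<Rightarrow> ('b \<Rightarrow> 'b) \<Rightarrow> bool" where
  "diff_module \<phi> sc \<Phi> \<longleftrightarrow>
     vector_space sc \<and> (\<exists>B. finite B \<and> module.span sc B = UNIV) \<and>
     bij \<Phi> \<and> (\<forall>x y. \<Phi> (x + y) = \<Phi> x + \<Phi> y) \<and>
     (\<forall>f m. \<Phi> (sc f m) = sc (\<phi> f) (\<Phi> m))"

definition diff_iso ::
  "('f::field \<Rightarrow> 'b::ab_group_add \<Rightarrow> 'b) \<Rightarrow> ('b \<Rightarrow> 'b) \<Rightarrow>
   ('f \<Rightarrow> 'c::ab_group_add \<Rightarrow> 'c) \<Rightarrow> ('c \<Rightarrow> 'c) \<Rightarrow> bool" where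
  "diff_iso sc1 \<Phi>1 sc2 \<Phi>2 \<longleftrightarrow>
     (\<exists>h. bij h \<and> Vector_Spaces.linear sc1 sc2 h \<and> (\<forall>m. h (\<Phi>1 m) = \<Phi>2 (h m)))"

definition irreducible_dm :: "('f::field \<Rightarrow> 'b::ab_group_add \<Rightarrow> 'b) \<Rightarrow> ('b \<Rightarrow> 'b) \<Rightarrow> bool" where
  "irreducible_dm sc \<Phi> \<longleftrightarrow>
     (\<exists>m::'b. m \<noteq> 0) \<and>
     (\<forall>S. module.subspace sc S \<and> \<Phi> ` S \<subseteq> S \<longrightarrow> S = {0} \<or> S = UNIV)"

definition diff_End :: "('f::field \<Rightarrow> 'b::ab_group_add \<Rightarrow> 'b) \<Rightarrow> ('b \<Rightarrow> 'b) \<Rightarrow> ('b \<Rightarrow> 'b) set" where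
  "diff_End sc \<Phi> = {h. Vector_Spaces.linear sc sc h \<and> (\<forall>m. h (\<Phi> m) = \<Phi> (h m))}"

(* M is isomorphic to K[Phi,Phi^-1]/K[Phi,Phi^-1]L with L = Phi^d + a_(d-1) Phi^(d-1) + ... + a_0,
   a_0 \<noteq> 0: i.e. there is e (the class of 1) with e, Phi e, ..., Phi^(d-1) e a basis and L e = 0.
   Newton polygon of L (with a_d = 1) has the single slope lambda: the points (i, -ord a_i)
   all lie on or below the segment from (0, -ord a_0) to (d, 0), which has slope lambda. *)
definition pure_of_slope :: "(complex fls \<Rightarrow> 'b::ab_group_add \<Rightarrow> 'b) \<Rightarrow> ('b \<Rightarrow> 'b) \<Rightarrow> rat \<Rightarrow> bool" where
  "pure_of_slope sc \<Phi> s \<longleftrightarrow>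
     (\<exists>d::nat. \<exists>a::nat \<Rightarrow> complex fls. \<exists>e::'b.
        0 < d \<and> a 0 \<noteq> 0 \<and>
        inj_on (\<lambda>i. (\<Phi> ^^ i) e) {..<d} \<and>
        \<not> module.dependent sc ((\<lambda>i. (\<Phi> ^^ i) e) ` {..<d}) \<and>
        module.span sc ((\<lambda>i. (\<Phi> ^^ i) e) ` {..<d}) = UNIV \<and>
        (\<Phi> ^^ d) e + (\<Sum>i<d. sc (a i) ((\<Phi> ^^ i) e)) = 0 \<and>
        of_int (fls_subdegree (a 0)) = s * of_nat d \<and>
        (\<forall>i<d. a i \<noteq> 0 \<longrightarrow> of_int (fls_subdegree (a i)) \<ge> s * of_nat (d - i)))"

(* Res(E(c z^(t/n))): the module K_n e with Phi e = c z^(t/n) e, viewed over K.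
   Carrier K_n (element f stands for f e); K acts through emb n. *)
definition E_scale :: "nat \<Rightarrow> complex fls \<Rightarrow> complex fls \<Rightarrow> complex fls" where
  "E_scale n f m = emb n f * m"

definition E_Phi :: "complex \<Rightarrow> int \<Rightarrow> nat \<Rightarrow> complex \<Rightarrow> complex fls \<Rightarrow> complex fls" where
  "E_Phi \<tau> t n c m = fls_const c * fls_X_intpow t * sigma \<tau> n m"

end

theory Submission
  imports Defs "HOL-Computational_Algebra.Fundamental_Theorem_Algebra"
begin

text \<open>
  On \<open>K\<^sub>n\<close> the operator \<open>\<Phi> f = c z\<^bsup>t/n\<^esup> \<phi>(f)\<close> raises valuations by \<open>t/n\<close>. Since \<open>gcd(t,n) = 1\<close>,
  the valuations of \<open>f, \<Phi> f, \<dots>, \<Phi>\<^bsup>n-1\<^esup> f\<close> have distinct fractional parts, and \<open>K\<close>-combinations of such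
  elements cannot cancel: every such orbit is a \<open>K\<close>-basis. This gives irreducibility, dimension \<open>n\<close>,
  and the relation \<open>\<Phi>\<^bsup>n\<^esup> 1 = (const) z\<^bsup>t\<^esup>\<close>, i.e. purity of slope \<open>t/n\<close>. An endomorphism is
  multiplication by its value at \<open>1\<close>, which is fixed by \<open>\<phi>\<^bsup>n\<^esup>\<close> and hence constant.
  The automorphism \<open>z\<^bsup>k/n\<^esup> \<mapsto> \<eta>\<^bsup>k\<^esup> z\<^bsup>k/n\<^esup>\<close> (\<open>\<eta>\<^bsup>n\<^esup> = 1\<close>) of \<open>K\<^sub>n/K\<close> changes \<open>c\<close> to \<open>\<eta>\<^bsup>t\<^esup> c\<close>,
  and multiplication by \<open>z\<^bsup>k/n\<^esup>\<close> changes it to \<open>q\<^bsup>-k/n\<^esup> c\<close>.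

  Conversely, an irreducible module is cyclic, \<open>M \<cong> K[\<Phi>,\<Phi>\<^sup>-\<^sup>1]/(L)\<close>. If \<open>t/n\<close> is the slope of the
  first edge of the Newton polygon of \<open>L\<close> and \<open>c\<close> a root of minimal modulus of the corresponding
  edge polynomial, \<open>L g = 0\<close> can be solved in \<open>K\<^sub>n\<close> coefficient by coefficient; \<open>e \<mapsto> g\<close> is then a
  nonzero morphism \<open>M \<rightarrow> E(c z\<^bsup>t/n\<^esup>)\<close> between irreducible modules, hence an isomorphism.
  Uniqueness follows by comparing valuations and then leading coefficients of \<open>\<Phi>\<^bsup>n\<^esup>\<close> on the
  image of \<open>1\<close> under an isomorphism.
\<close>

unbundle fps_syntax

section \<open>Twisting Laurent series by characters of \<open>\<int>\<close>\<close>

definition int_character :: "(int \<Rightarrow> 'a::field) \<Rightarrow> bool" where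
  "int_character \<chi> \<longleftrightarrow> \<chi> 0 = 1 \<and> (\<forall>a b. \<chi> (a + b) = \<chi> a * \<chi> b)"

definition fls_twist :: "(int \<Rightarrow> 'a::field) \<Rightarrow> 'a fls \<Rightarrow> 'a fls" where
  "fls_twist \<chi> f = Abs_fls (\<lambda>k. \<chi> k * f $$ k)"

lemma fls_twist_nth [simp]: "fls_twist \<chi> f $$ k = \<chi> k * f $$ k"
  unfolding fls_twist_def by (rule nth_Abs_fls_lower_bound[of "fls_subdegree f"]) auto

lemma int_character_add: "int_character \<chi> \<Longrightarrow> \<chi> (a + b) = \<chi> a * \<chi> b"
  unfolding int_character_def by blast

lemma int_character_0: "int_character \<chi> \<Longrightarrow> \<chi> 0 = 1"
  unfolding int_character_def by blast

lemma int_character_nonzero: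
  assumes "int_character \<chi>"
  shows "\<chi> k \<noteq> 0"
proof
  assume "\<chi> k = 0"
  then have "\<chi> (k + - k) = 0"
    using int_character_add[OF assms, of k "- k"] by simp
  then show False
    using int_character_0[OF assms] by simp
qed

lemma int_character_power: "int_character \<chi> \<Longrightarrow> int_character (\<lambda>k. \<chi> k ^ m)"
  unfolding int_character_def by (simp add: power_mult_distrib)

lemma int_character_power_int:
  "(a::'a::field) \<noteq> 0 \<Longrightarrow> int_character (\<lambda>k. a powi k)"
  unfolding int_character_def by (simp add: power_int_add)

lemma fls_twist_0 [simp]: "fls_twist \<chi> 0 = 0"
  by (rule fls_eqI) simp

lemma fls_twist_add: "fls_twist \<chi> (f + g) = fls_twist \<chi> f + fls_twist \<chi> g"
  by (rule fls_eqI) (simp add: algebra_simps)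

lemma fls_twist_twist: "fls_twist \<chi>1 (fls_twist \<chi>2 f) = fls_twist (\<lambda>k. \<chi>1 k * \<chi>2 k) f"
  by (rule fls_eqI) (simp add: algebra_simps)

lemma fls_twist_one: "fls_twist (\<lambda>k. 1) f = f"
  by (rule fls_eqI) simp

lemma fls_twist_eq_0_iff:
  assumes "int_character \<chi>"
  shows "fls_twist \<chi> f = 0 \<longleftrightarrow> f = 0"
proof
  assume "fls_twist \<chi> f = 0"
  then have "\<chi> k * f $$ k = 0" for k
    by (metis fls_twist_nth fls_zero_nth)
  then show "f = 0"
    using int_character_nonzero[OF assms] by (intro fls_zero_eqI) simp
qed simp

lemma fls_subdegree_twist:
  assumes "int_character \<chi>"
  shows "fls_subdegree (fls_twist \<chi> f) = fls_subdegree f"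
proof (cases "f = 0")
  case False
  then show ?thesis
    by (intro fls_subdegree_eqI) (use int_character_nonzero[OF assms] in auto)
qed simp

lemma fls_twist_mult:
  assumes "int_character \<chi>"
  shows "fls_twist \<chi> (f * g) = fls_twist \<chi> f * fls_twist \<chi> g"
proof (rule fls_eqI)
  fix N
  have "fls_twist \<chi> (f * g) $$ N =
      (\<Sum>i = fls_subdegree f..N - fls_subdegree g. \<chi> N * (f $$ i * g $$ (N - i)))"
    by (simp add: fls_times_nth(2) sum_distrib_left)
  also have "\<dots> = (\<Sum>i = fls_subdegree f..N - fls_subdegree g.
                    (\<chi> i * f $$ i) * (\<chi> (N - i) * g $$ (N - i)))"
  proof (rule sum.cong[OF refl])
    fix i
    have "\<chi> N = \<chi> i * \<chi> (N - i)"
      using int_character_add[OF assms, of i "N - i"] by simp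
    then show "\<chi> N * (f $$ i * g $$ (N - i)) = \<chi> i * f $$ i * (\<chi> (N - i) * g $$ (N - i))"
      by (simp add: algebra_simps)
  qed
  also have "\<dots> = (fls_twist \<chi> f * fls_twist \<chi> g) $$ N"
    by (simp add: fls_times_nth(2) fls_subdegree_twist[OF assms])
  finally show "fls_twist \<chi> (f * g) $$ N = (fls_twist \<chi> f * fls_twist \<chi> g) $$ N" .
qed

lemma fls_twist_const:
  "int_character \<chi> \<Longrightarrow> fls_twist \<chi> (fls_const a) = fls_const a"
  by (rule fls_eqI) (simp add: int_character_0)

lemma fls_twist_X_intpow: "fls_twist \<chi> (fls_X_intpow i) = fls_const (\<chi> i) * fls_X_intpow i"
  by (rule fls_eqI) simp

lemma fls_twist_inverse_twist:
  "int_character \<chi> \<Longrightarrow> fls_twist (\<lambda>k. inverse (\<chi> k)) (fls_twist \<chi> f) = f"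
  "int_character \<chi> \<Longrightarrow> fls_twist \<chi> (fls_twist (\<lambda>k. inverse (\<chi> k)) f) = f"
  by (rule fls_eqI, simp add: int_character_nonzero)+

lemma bij_fls_twist: "int_character \<chi> \<Longrightarrow> bij (fls_twist \<chi>)"
  by (rule o_bij[of "fls_twist (\<lambda>k. inverse (\<chi> k))"]) (auto simp: fls_twist_inverse_twist)

lemma fls_twist_fixed_imp_const:
  assumes "fls_twist \<chi> g = g" and "\<And>k. k \<noteq> 0 \<Longrightarrow> \<chi> k \<noteq> 1"
  shows "g = fls_const (g $$ 0)"
proof (rule fls_eqI)
  fix k
  have "\<chi> k * g $$ k = g $$ k"
    using assms(1) by (metis fls_twist_nth)
  then show "g $$ k = fls_const (g $$ 0) $$ k"
    using assms(2)[of k] by (cases "k = 0") auto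
qed

section \<open>The difference fields \<open>K\<^sub>n\<close>\<close>

lemma qpow_add: "qpow \<tau> (a + b) = qpow \<tau> a * qpow \<tau> b"
  unfolding qpow_def by (simp add: of_rat_add distrib_left exp_add)

lemma qpow_0 [simp]: "qpow \<tau> 0 = 1"
  unfolding qpow_def by simp

lemma qpow_power: "qpow \<tau> r ^ m = qpow \<tau> (of_nat m * r)"
  by (induction m) (simp_all add: qpow_add algebra_simps)

lemma norm_qpow: "norm (qpow \<tau> r) = exp (- 2 * pi * Im \<tau> * of_rat r)"
proof -
  have "(of_rat r :: complex) = of_real (of_rat r)"
    by (cases r) (simp add: of_rat_rat)
  then show ?thesis
    unfolding qpow_def norm_exp_eq_Re by simp
qed

text \<open>\<open>qchar \<tau> n k\<close> is \<open>q\<^bsup>k/n\<^esup>\<close>, the factor by which \<open>\<phi>\<close> multiplies \<open>z\<^bsup>k/n\<^esup>\<close>.\<close>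

definition qchar :: "complex \<Rightarrow> nat \<Rightarrow> int \<Rightarrow> complex" where
  "qchar \<tau> n k = qpow \<tau> (of_int k / of_nat n)"

lemma int_character_qchar: "int_character (qchar \<tau> n)"
  unfolding int_character_def qchar_def by (simp add: add_divide_distrib qpow_add)

lemma qchar_nonzero: "qchar \<tau> n k \<noteq> 0"
  by (rule int_character_nonzero[OF int_character_qchar])

lemma sigma_eq_fls_twist: "sigma \<tau> n = fls_twist (qchar \<tau> n)"
  unfolding sigma_def fls_twist_def qchar_def by (rule ext) simp

lemma qchar_power_self: "n \<ge> 1 \<Longrightarrow> qchar \<tau> n k ^ n = qpow \<tau> (of_int k)"
  by (simp add: qchar_def qpow_power)

lemma norm_qchar_power_self:
  "n \<ge> 1 \<Longrightarrow> norm (qchar \<tau> n k) ^ n = exp (- 2 * pi * Im \<tau> * of_int k)"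
  by (simp flip: norm_power add: qchar_power_self norm_qpow)

lemma qchar_power_self_neq_1:
  assumes "Im \<tau> > 0" and "n \<ge> 1" and "k \<noteq> 0"
  shows "qchar \<tau> n k ^ n \<noteq> 1"
proof
  assume "qchar \<tau> n k ^ n = 1"
  then have "exp (- 2 * pi * Im \<tau> * of_int k) = 1"
    using norm_qchar_power_self[OF assms(2)] by (metis norm_one norm_power)
  then show False
    using assms by simp
qed

lemma norm_qchar_less_1:
  assumes "Im \<tau> > 0" and "n \<ge> 1" and "k > 0"
  shows "norm (qchar \<tau> n k) < 1"
proof -
  have "of_rat (of_int k / of_nat n :: rat) > (0::real)"
    using assms by (simp add: zero_less_divide_iff)
  then show ?thesis
    unfolding qchar_def norm_qpow using assms(1) by simp
qed

lemma sum_multiples_reindex: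
  fixes n :: int and h :: "int \<Rightarrow> 'a::comm_monoid_add"
  assumes "n > 0" and "\<And>i. \<not> n dvd i \<Longrightarrow> h i = 0"
  shows "(\<Sum>i = n * a..n * b. h i) = (\<Sum>j = a..b. h (n * j))"
proof -
  have "(\<Sum>j = a..b. h (n * j)) = (\<Sum>i\<in>(\<lambda>j. n * j) ` {a..b}. h i)"
    using assms(1) by (simp add: sum.reindex inj_on_def)
  also have "\<dots> = (\<Sum>i = n * a..n * b. h i)"
  proof (rule sum.mono_neutral_left)
    show "(\<lambda>j. n * j) ` {a..b} \<subseteq> {n * a..n * b}"
      using assms(1) by auto
    show "\<forall>i\<in>{n * a..n * b} - (\<lambda>j. n * j) ` {a..b}. h i = 0"
    proof
      fix i assume i: "i \<in> {n * a..n * b} - (\<lambda>j. n * j) ` {a..b}"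
      show "h i = 0"
      proof (cases "n dvd i")
        case True
        then obtain j where "i = n * j" by blast
        with i assms(1) show ?thesis by (auto simp: mult_le_cancel_left)
      qed (rule assms(2))
    qed
  qed simp
  finally show ?thesis by simp
qed

lemma fls_const_X_intpow_mult_nth:
  "(fls_const a * fls_X_intpow m * (f :: 'a::comm_ring_1 fls)) $$ N = a * f $$ (N - m)"
proof -
  have "(fls_const a * fls_X_intpow m * f) $$ N = (fls_const a * (fls_X_intpow m * f)) $$ N"
    by (simp only: mult.assoc)
  then show ?thesis
    by (simp add: fls_X_intpow_times_conv_shift)
qed

context
  fixes n :: nat
  assumes n: "n \<ge> 1"
begin

lemma emb_nth: "emb n f $$ k = (if int n dvd k then f $$ (k div int n) else 0)"
  unfolding emb_def
proof (rule nth_Abs_fls_lower_bound[of "int n * fls_subdegree f"], intro allI impI)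
  fix k assume k: "k < int n * fls_subdegree f"
  show "(if int n dvd k then f $$ (k div int n) else 0) = 0"
  proof (cases "int n dvd k")
    case True
    then obtain m where "k = int n * m" by blast
    with k n show ?thesis by (simp add: mult_less_cancel_left)
  qed simp
qed

lemma emb_nth_mult [simp]: "emb n f $$ (int n * k) = f $$ k"
  using n by (simp add: emb_nth)

lemma emb_add: "emb n (f + g) = emb n f + emb n g"
  by (rule fls_eqI) (simp add: emb_nth)

lemma emb_uminus: "emb n (- f) = - emb n f"
  by (rule fls_eqI) (simp add: emb_nth)

lemma emb_const: "emb n (fls_const a) = fls_const a"
  using n by (intro fls_eqI) (auto simp: emb_nth)

lemma emb_1: "emb n 1 = 1"
  using emb_const[of 1] by simp

lemma emb_X_intpow: "emb n (fls_X_intpow i) = fls_X_intpow (int n * i)"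
  using n by (intro fls_eqI) (auto simp: emb_nth)

lemma emb_eq_0_iff: "emb n f = 0 \<longleftrightarrow> f = 0"
proof
  assume "emb n f = 0"
  then show "f = 0"
    by (intro fls_zero_eqI) (metis emb_nth_mult fls_zero_nth)
qed (simp add: emb_nth fls_eqI)

lemma fls_subdegree_emb: "fls_subdegree (emb n f) = int n * fls_subdegree f"
proof (cases "f = 0")
  case False
  show ?thesis
  proof (rule fls_subdegree_eqI)
    show "emb n f $$ (int n * fls_subdegree f) \<noteq> 0"
      using False by simp
    fix k assume k: "k < int n * fls_subdegree f"
    show "emb n f $$ k = 0"
    proof (cases "int n dvd k")
      case True
      then obtain m where "k = int n * m" by blast
      with k n show ?thesis by (simp add: mult_less_cancel_left)
    qed (simp add: emb_nth)
  qed
qed (simp add: emb_eq_0_iff[THEN iffD2])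

lemma emb_mult: "emb n (f * g) = emb n f * emb n g"
proof (rule fls_eqI)
  fix k
  define df dg where "df = fls_subdegree f" and "dg = fls_subdegree g"
  have prod_nth: "(emb n f * emb n g) $$ k =
      (\<Sum>i = int n * df..k - int n * dg. emb n f $$ i * emb n g $$ (k - i))"
    by (simp add: fls_times_nth(2) fls_subdegree_emb df_def dg_def)
  show "emb n (f * g) $$ k = (emb n f * emb n g) $$ k"
  proof (cases "int n dvd k")
    case False
    have "emb n f $$ i * emb n g $$ (k - i) = 0" for i
    proof (cases "int n dvd i")
      case True
      then have "\<not> int n dvd (k - i)"
        using False by (metis dvd_add_left_iff diff_add_cancel)
      then show ?thesis
        by (simp add: emb_nth)
    qed (simp add: emb_nth)
    then have "(emb n f * emb n g) $$ k = 0"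
      unfolding prod_nth by (intro sum.neutral) blast
    then show ?thesis
      using False by (simp add: emb_nth)
  next
    case True
    then obtain m where m: "k = int n * m" by blast
    have "(emb n f * emb n g) $$ k =
        (\<Sum>i = int n * df..int n * (m - dg). emb n f $$ i * emb n g $$ (int n * m - i))"
      using prod_nth m by (simp add: algebra_simps)
    also have "\<dots> = (\<Sum>j = df..m - dg. emb n f $$ (int n * j) * emb n g $$ (int n * m - int n * j))"
      using n by (intro sum_multiples_reindex) (auto simp: emb_nth)
    also have "\<dots> = (\<Sum>j = df..m - dg. f $$ j * g $$ (m - j))"
      by (simp flip: right_diff_distrib)
    also have "\<dots> = (f * g) $$ m"
      by (simp add: fls_times_nth(2) df_def dg_def)
    finally show ?thesis
      using m by simp
  qed
qed

lemma sigma_emb: "sigma \<tau> n (emb n f) = emb n (phiK \<tau> f)"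
proof (rule fls_eqI)
  fix k
  show "sigma \<tau> n (emb n f) $$ k = emb n (phiK \<tau> f) $$ k"
  proof (cases "int n dvd k")
    case True
    then obtain m where "k = int n * m" by blast
    moreover have "(of_int (int n * m) / of_nat n :: rat) = of_int m"
      using n by simp
    ultimately show ?thesis
      by (simp add: sigma_eq_fls_twist qchar_def)
  qed (simp add: sigma_eq_fls_twist emb_nth)
qed

end

lemma sum_nonzero_if_subdegrees_distinct:
  fixes h :: "'a \<Rightarrow> 'b::comm_ring_1 fls"
  assumes "finite T" and "T \<noteq> {}" and "\<And>v. v \<in> T \<Longrightarrow> h v \<noteq> 0"
    and "inj_on (\<lambda>v. fls_subdegree (h v)) T"
  shows "(\<Sum>v\<in>T. h v) \<noteq> 0"
proof -
  define m where "m = Min ((\<lambda>v. fls_subdegree (h v)) ` T)"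
  have "m \<in> (\<lambda>v. fls_subdegree (h v)) ` T"
    unfolding m_def using assms(1,2) by (intro Min_in) auto
  then obtain v0 where v0: "v0 \<in> T" "fls_subdegree (h v0) = m"
    by blast
  have "h v $$ m = 0" if "v \<in> T" "v \<noteq> v0" for v
  proof -
    have "m \<le> fls_subdegree (h v)" and "fls_subdegree (h v) \<noteq> m"
      unfolding m_def using assms(1,4) that v0 by (auto simp: inj_on_def m_def)
    then show ?thesis by simp
  qed
  then have "(\<Sum>v\<in>T. h v) $$ m = h v0 $$ m"
    using assms(1) v0(1) by (simp add: fls_nth_sum sum.remove)
  moreover have "h v0 $$ m \<noteq> 0"
    using v0 assms(3) by (metis nth_fls_subdegree_nonzero)
  ultimately show ?thesis
    by (metis fls_zero_nth)
qed

text \<open>Splitting a series in \<open>w = z\<^bsup>1/n\<^esup>\<close> by the residue class of the exponent mod \<open>n\<close>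
  exhibits \<open>1, w, \<dots>, w\<^bsup>n-1\<^esup>\<close> as spanning \<open>K\<^sub>n\<close> over \<open>K\<close>.\<close>

definition fls_residue_part :: "nat \<Rightarrow> nat \<Rightarrow> 'a::zero fls \<Rightarrow> 'a fls" where
  "fls_residue_part n j f = Abs_fls (\<lambda>m. f $$ (int n * m + int j))"

lemma fls_residue_part_nth:
  assumes "j < n"
  shows "fls_residue_part n j f $$ m = f $$ (int n * m + int j)"
  unfolding fls_residue_part_def
proof (rule nth_Abs_fls_lower_bound[of "min 0 (fls_subdegree f)"], intro allI impI)
  fix m assume m: "m < min 0 (fls_subdegree f)"
  have "int n * (m + 1) \<le> 1 * (m + 1)"
    by (rule mult_right_mono_neg) (use assms m in auto)
  then have "int n * m + int j < fls_subdegree f"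
    using assms m by (simp add: algebra_simps)
  then show "f $$ (int n * m + int j) = 0"
    by simp
qed

lemma fls_residue_decomposition:
  fixes f :: "complex fls"
  assumes n: "n \<ge> 1"
  shows "(\<Sum>j<n. emb n (fls_residue_part n j f) * fls_X_intpow (int j)) = f"
proof (rule fls_eqI)
  fix k
  define r where "r = nat (k mod int n)"
  have r: "r < n" "int r = k mod int n"
    using n by (simp_all add: r_def nat_less_iff)
  have summand: "(emb n (fls_residue_part n j f) * fls_X_intpow (int j)) $$ k =
      (if j = r then f $$ k else 0)" if "j < n" for j
  proof -
    have dvd_iff: "int n dvd k - int j \<longleftrightarrow> j = r"
      using that r by (auto simp: mod_eq_dvd_iff[symmetric])
    show ?thesis
    proof (cases "j = r")
      case True
      then obtain m where m: "k - int j = int n * m"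
        using dvd_iff by blast
      have "(emb n (fls_residue_part n j f) * fls_X_intpow (int j)) $$ k =
          fls_residue_part n j f $$ m"
        using m n by (simp add: fls_X_intpow_times_conv_shift)
      also have "\<dots> = f $$ k"
        using that by (simp add: fls_residue_part_nth flip: m)
      finally show ?thesis
        using True by simp
    qed (use dvd_iff n in \<open>simp add: fls_X_intpow_times_conv_shift emb_nth\<close>)
  qed
  have "(\<Sum>j<n. emb n (fls_residue_part n j f) * fls_X_intpow (int j)) $$ k =
      (\<Sum>j<n. if j = r then f $$ k else 0)"
    by (simp add: fls_nth_sum summand)
  also have "\<dots> = f $$ k"
    using r by simp
  finally show "(\<Sum>j<n. emb n (fls_residue_part n j f) * fls_X_intpow (int j)) $$ k = f $$ k" .
qed

lemma coprime_mult_mod_inj: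
  assumes "coprime t (int n)" and "k < n" and "k' < n"
    and "(t * int k + a) mod int n = (t * int k' + a) mod int n"
  shows "k = k'"
proof -
  have "int n dvd t * (int k - int k')"
    using assms(4) by (simp add: mod_eq_dvd_iff algebra_simps)
  then have "int n dvd int k - int k'"
    using assms(1) by (metis coprime_commute coprime_dvd_mult_right_iff)
  with assms(2,3) show ?thesis
    using dvd_imp_le_int[of "int k - int k'" "int n"] by (cases "k = k'") auto
qed

section \<open>Difference modules\<close>

lemma diff_moduleD:
  assumes "diff_module \<phi> sc \<Phi>"
  shows "vector_space sc" and "\<exists>B. finite B \<and> module.span sc B = UNIV" and "bij \<Phi>"
    and "\<Phi> (x + y) = \<Phi> x + \<Phi> y" and "\<Phi> (sc f m) = sc (\<phi> f) (\<Phi> m)" and "\<Phi> 0 = 0"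
proof -
  show add: "\<Phi> (x + y) = \<Phi> x + \<Phi> y" for x y
    using assms unfolding diff_module_def by blast
  show "\<Phi> 0 = 0"
    using add[of 0 0] by simp
qed (use assms in \<open>auto simp: diff_module_def\<close>)

lemma funpow_intertwine:
  "(\<And>m. h (P1 m) = P2 (h m)) \<Longrightarrow> h ((P1 ^^ k) m) = (P2 ^^ k) (h m)"
  by (induction k) auto

lemma diff_iso_trans:
  assumes "diff_iso s1 P1 s2 P2" and "diff_iso s2 P2 s3 P3"
  shows "diff_iso s1 P1 s3 P3"
proof -
  obtain h1 where h1: "bij h1" "Vector_Spaces.linear s1 s2 h1" "\<forall>m. h1 (P1 m) = P2 (h1 m)"
    using assms(1) unfolding diff_iso_def by blast
  obtain h2 where h2: "bij h2" "Vector_Spaces.linear s2 s3 h2" "\<forall>m. h2 (P2 m) = P3 (h2 m)"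
    using assms(2) unfolding diff_iso_def by blast
  have "bij (h2 \<circ> h1)" and "Vector_Spaces.linear s1 s3 (h2 \<circ> h1)"
    using h1 h2 by (auto simp: bij_comp intro: Vector_Spaces.linear_compose)
  with h1 h2 show ?thesis
    unfolding diff_iso_def by auto
qed

lemma diff_iso_sym:
  assumes "vector_space s1" and "vector_space s2" and "diff_iso s1 P1 s2 P2"
  shows "diff_iso s2 P2 s1 P1"
proof -
  interpret vector_space_pair s1 s2
    using assms(1,2) by (simp add: vector_space_pair_def)
  obtain h where h: "bij h" "Vector_Spaces.linear s1 s2 h" "\<forall>m. h (P1 m) = P2 (h m)"
    using assms(3) unfolding diff_iso_def by blast
  obtain g where g: "Vector_Spaces.linear s2 s1 g" "g \<circ> h = id"
    using linear_injective_left_inverse[OF h(2) bij_is_inj[OF h(1)]] by blast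
  have gh: "g (h x) = x" for x
    using g(2) by (metis comp_apply id_apply)
  have hg: "h (g y) = y" for y
    using h(1) gh by (metis bij_is_surj surjD)
  have "g (P2 y) = P1 (g y)" for y
    by (metis gh hg h(3))
  moreover have "bij g"
    using gh hg by (intro o_bij[of h]) auto
  ultimately show ?thesis
    using g(1) unfolding diff_iso_def by blast
qed

lemma diff_hom_iterate_eq_scale:
  assumes "\<And>m. h (P1 m) = P2 (h m)" and "Vector_Spaces.linear s1 s2 h"
    and "(P1 ^^ k) x = s1 a x"
  shows "(P2 ^^ k) (h x) = s2 a (h x)"
  using funpow_intertwine[of h P1 P2 k x] assms
  by (metis Vector_Spaces.linear_def module_hom.scale)

definition iterates :: "('b \<Rightarrow> 'b) \<Rightarrow> 'b \<Rightarrow> nat \<Rightarrow> 'b set" where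
  "iterates \<Phi> e d = (\<lambda>i. (\<Phi> ^^ i) e) ` {..<d}"

definition iterates_basis ::
    "('f::field \<Rightarrow> 'b::ab_group_add \<Rightarrow> 'b) \<Rightarrow> ('b \<Rightarrow> 'b) \<Rightarrow> 'b \<Rightarrow> nat \<Rightarrow> bool" where
  "iterates_basis sc \<Phi> e d \<longleftrightarrow>
     inj_on (\<lambda>i. (\<Phi> ^^ i) e) {..<d} \<and> \<not> module.dependent sc (iterates \<Phi> e d) \<and>
     module.span sc (iterates \<Phi> e d) = UNIV"

lemma iterate_in_iterates: "i < d \<Longrightarrow> (\<Phi> ^^ i) e \<in> iterates \<Phi> e d"
  unfolding iterates_def by blast

lemma iterates_Suc: "iterates \<Phi> e (Suc d) = insert ((\<Phi> ^^ d) e) (iterates \<Phi> e d)"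
  by (simp add: iterates_def lessThan_Suc)

context vector_space
begin

lemma independent_card_ge_imp_span_UNIV:
  assumes "finite T" and "span T = UNIV" and "independent B" and "card T \<le> card B"
  shows "span B = UNIV"
proof (rule ccontr)
  assume "span B \<noteq> UNIV"
  then obtain x where x: "x \<notin> span B" by auto
  have "finite B"
    using independent_span_bound[OF assms(1,3)] assms(2) by auto
  moreover have "independent (insert x B)"
    using x assms(3) by (simp add: independent_insertI)
  then have "card (insert x B) \<le> card T"
    using independent_span_bound[OF assms(1)] assms(2) by auto
  moreover have "x \<notin> B"
    using x span_base by blast
  ultimately show False
    using assms(4) by simp
qed

lemma semilinear_image_span:
  assumes "\<And>x y. \<Phi> (x + y) = \<Phi> x + \<Phi> y" and "\<And>f m. \<Phi> (scale f m) = scale (\<phi> f) (\<Phi> m)"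
    and "x \<in> span X"
  shows "\<Phi> x \<in> span (\<Phi> ` X)"
  using assms(3)
proof (induction rule: span_induct_alt)
  case base
  have "\<Phi> 0 = 0"
    using assms(1)[of 0 0] by simp
  then show ?case
    by (simp add: span_zero)
next
  case (step c x y)
  then show ?case
    using assms(1,2) by (simp add: span_add span_scale span_base)
qed

lemma iterates_first_dependence:
  assumes "finite B" and "span B = UNIV"
  obtains d where "independent (iterates \<Phi> e d)" and "card (iterates \<Phi> e d) = d"
    and "(\<Phi> ^^ d) e \<in> span (iterates \<Phi> e d)"
proof -
  have indep: "independent (iterates \<Phi> e k) \<and> card (iterates \<Phi> e k) = k"
    if "\<And>j. j < k \<Longrightarrow> (\<Phi> ^^ j) e \<notin> span (iterates \<Phi> e j)" for k
    using that
  proof (induction k)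
    case 0
    then show ?case by (simp add: iterates_def independent_empty)
  next
    case (Suc k)
    then have "(\<Phi> ^^ k) e \<notin> span (iterates \<Phi> e k)"
      by simp
    moreover from this have "(\<Phi> ^^ k) e \<notin> iterates \<Phi> e k"
      using span_base by blast
    moreover have "finite (iterates \<Phi> e k)"
      by (simp add: iterates_def)
    ultimately show ?case
      using Suc by (simp add: iterates_Suc independent_insert)
  qed
  have "\<exists>k. (\<Phi> ^^ k) e \<in> span (iterates \<Phi> e k)"
  proof (rule ccontr)
    assume "\<not> ?thesis"
    then have "independent (iterates \<Phi> e (Suc (card B)))"
      and "card (iterates \<Phi> e (Suc (card B))) = Suc (card B)"
      using indep by blast+
    then show False
      using independent_span_bound[OF assms(1)] assms(2) by fastforce
  qed
  define d where "d = (LEAST k. (\<Phi> ^^ k) e \<in> span (iterates \<Phi> e k))"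
  have "(\<Phi> ^^ d) e \<in> span (iterates \<Phi> e d)"
    unfolding d_def using \<open>\<exists>k. _\<close> by (rule LeastI_ex)
  moreover have "(\<Phi> ^^ k) e \<notin> span (iterates \<Phi> e k)" if "k < d" for k
    using that unfolding d_def by (rule not_less_Least)
  ultimately show ?thesis
    using that indep[of d] by blast
qed

lemma span_iterates_stable:
  assumes add: "\<And>x y. \<Phi> (x + y) = \<Phi> x + \<Phi> y" and scale: "\<And>f m. \<Phi> (scale f m) = scale (\<phi> f) (\<Phi> m)"
    and dep: "(\<Phi> ^^ d) e \<in> span (iterates \<Phi> e d)"
  shows "\<Phi> ` span (iterates \<Phi> e d) \<subseteq> span (iterates \<Phi> e d)"
proof -
  have "\<Phi> ` iterates \<Phi> e d \<subseteq> span (iterates \<Phi> e d)"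
  proof
    fix y assume "y \<in> \<Phi> ` iterates \<Phi> e d"
    then obtain i where i: "i < d" "y = (\<Phi> ^^ Suc i) e"
      by (auto simp: iterates_def)
    show "y \<in> span (iterates \<Phi> e d)"
    proof (cases "Suc i < d")
      case True
      then show ?thesis
        using i(2) by (intro span_base) (simp only: iterate_in_iterates)
    next
      case False
      then have "Suc i = d"
        using i(1) by simp
      then show ?thesis
        using i(2) dep by auto
    qed
  qed
  then have "span (\<Phi> ` iterates \<Phi> e d) \<subseteq> span (iterates \<Phi> e d)"
    by (simp add: span_minimal)
  then show ?thesis
    using semilinear_image_span[of \<Phi> \<phi>, OF add scale] by blast
qed

end

lemma irreducible_diff_module_iterates_basis:
  assumes dm: "diff_module \<phi> sc \<Phi>" and irr: "irreducible_dm sc \<Phi>" and "e \<noteq> 0"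
  obtains d a where "d \<ge> 1" and "iterates_basis sc \<Phi> e d"
    and "(\<Phi> ^^ d) e + (\<Sum>i<d. sc (a i) ((\<Phi> ^^ i) e)) = 0"
proof -
  interpret vector_space sc
    using diff_moduleD(1)[OF dm] .
  obtain B where "finite B" "span B = UNIV"
    using diff_moduleD(2)[OF dm] by blast
  then obtain d where indep: "independent (iterates \<Phi> e d)"
    and card: "card (iterates \<Phi> e d) = d" and dep: "(\<Phi> ^^ d) e \<in> span (iterates \<Phi> e d)"
    using iterates_first_dependence by blast
  have d: "d \<ge> 1"
    using dep \<open>e \<noteq> 0\<close> by (cases d) (auto simp: iterates_def)
  have inj: "inj_on (\<lambda>i. (\<Phi> ^^ i) e) {..<d}"
    using card by (intro eq_card_imp_inj_on) (simp_all add: iterates_def)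
  have stable: "\<Phi> ` span (iterates \<Phi> e d) \<subseteq> span (iterates \<Phi> e d)"
    using diff_moduleD(4,5)[OF dm] dep by (rule span_iterates_stable)
  moreover have "e \<in> span (iterates \<Phi> e d)"
    using iterate_in_iterates[of 0 d \<Phi> e] d by (simp add: span_base)
  ultimately have span: "span (iterates \<Phi> e d) = UNIV"
    using irr stable \<open>e \<noteq> 0\<close> unfolding irreducible_dm_def by (auto simp: subspace_span)
  obtain u where "(\<Phi> ^^ d) e = (\<Sum>v\<in>iterates \<Phi> e d. sc (u v) v)"
    using dep span_finite[of "iterates \<Phi> e d"] by (auto simp: iterates_def)
  also have "\<dots> = (\<Sum>i<d. sc (u ((\<Phi> ^^ i) e)) ((\<Phi> ^^ i) e))"
    unfolding iterates_def by (simp add: sum.reindex[OF inj])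
  finally have "(\<Phi> ^^ d) e + (\<Sum>i<d. sc (- u ((\<Phi> ^^ i) e)) ((\<Phi> ^^ i) e)) = 0"
    by (simp add: sum_negf)
  with d inj indep span show ?thesis
    using that[of d "\<lambda>i. - u ((\<Phi> ^^ i) e)"] unfolding iterates_basis_def by blast
qed

lemma diff_hom_if_commutes_on_spanning:
  assumes dm1: "diff_module \<phi> sc1 \<Phi>1" and dm2: "diff_module \<phi> sc2 \<Phi>2"
    and lin: "Vector_Spaces.linear sc1 sc2 h" and span: "module.span sc1 B = UNIV"
    and comm: "\<And>b. b \<in> B \<Longrightarrow> h (\<Phi>1 b) = \<Phi>2 (h b)"
  shows "h (\<Phi>1 m) = \<Phi>2 (h m)"
proof -
  interpret vector_space_pair sc1 sc2
    using diff_moduleD(1)[OF dm1] diff_moduleD(1)[OF dm2] by (simp add: vector_space_pair_def)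
  interpret h: Vector_Spaces.linear sc1 sc2 h
    by (rule lin)
  have "vs1.subspace {m. h (\<Phi>1 m) = \<Phi>2 (h m)}"
    by (intro vs1.subspaceI)
      (simp_all add: diff_moduleD(4-6)[OF dm1] diff_moduleD(4-6)[OF dm2] h.add h.scale)
  then have "vs1.span B \<subseteq> {m. h (\<Phi>1 m) = \<Phi>2 (h m)}"
    using comm by (intro vs1.span_minimal) auto
  then show ?thesis
    using span by auto
qed

lemma diff_hom_from_iterates_basis:
  assumes dm1: "diff_module \<phi> sc1 \<Phi>1" and dm2: "diff_module \<phi> sc2 \<Phi>2"
    and basis: "iterates_basis sc1 \<Phi>1 e d" and d: "d \<ge> 1"
    and rel1: "(\<Phi>1 ^^ d) e + (\<Sum>i<d. sc1 (a i) ((\<Phi>1 ^^ i) e)) = 0"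
    and rel2: "(\<Phi>2 ^^ d) g + (\<Sum>i<d. sc2 (a i) ((\<Phi>2 ^^ i) g)) = 0"
  obtains h where "Vector_Spaces.linear sc1 sc2 h" and "\<And>m. h (\<Phi>1 m) = \<Phi>2 (h m)"
    and "h e = g"
proof -
  interpret vector_space_pair sc1 sc2
    using diff_moduleD(1)[OF dm1] diff_moduleD(1)[OF dm2] by (simp add: vector_space_pair_def)
  let ?V = "iterates \<Phi>1 e d"
  have inj: "inj_on (\<lambda>i. (\<Phi>1 ^^ i) e) {..<d}" and indep: "vs1.independent ?V"
    and span: "vs1.span ?V = UNIV"
    using basis unfolding iterates_basis_def by auto
  define h where "h = construct ?V (\<lambda>v. (\<Phi>2 ^^ the_inv_into {..<d} (\<lambda>i. (\<Phi>1 ^^ i) e) v) g)"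
  have lin: "Vector_Spaces.linear sc1 sc2 h"
    unfolding h_def using indep by (rule linear_construct)
  interpret h: Vector_Spaces.linear sc1 sc2 h
    by (rule lin)
  have h_iterate: "h ((\<Phi>1 ^^ i) e) = (\<Phi>2 ^^ i) g" if "i < d" for i
    unfolding h_def using that
    by (simp add: construct_basis[OF indep] iterate_in_iterates the_inv_into_f_f[OF inj])
  have "h (\<Phi>1 v) = \<Phi>2 (h v)" if "v \<in> ?V" for v
  proof -
    obtain i where i: "i < d" "v = (\<Phi>1 ^^ i) e"
      using \<open>v \<in> ?V\<close> by (auto simp: iterates_def)
    have "h ((\<Phi>1 ^^ Suc i) e) = (\<Phi>2 ^^ Suc i) g"
    proof (cases "Suc i < d")
      case False
      then have "Suc i = d"
        using i(1) by simp
      have "h ((\<Phi>1 ^^ d) e) = - (\<Sum>j<d. sc2 (a j) (h ((\<Phi>1 ^^ j) e)))"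
        using rel1 by (simp add: eq_neg_iff_add_eq_0[symmetric] h.neg h.sum h.scale)
      also have "\<dots> = (\<Phi>2 ^^ d) g"
        using rel2 by (simp add: h_iterate add_eq_0_iff)
      finally show ?thesis
        using \<open>Suc i = d\<close> by simp
    qed (rule h_iterate)
    then show ?thesis
      using i h_iterate by simp
  qed
  then have "h (\<Phi>1 m) = \<Phi>2 (h m)" for m
    by (rule diff_hom_if_commutes_on_spanning[OF dm1 dm2 lin span])
  moreover have "h e = g"
    using h_iterate[of 0] d by simp
  ultimately show ?thesis
    using that lin by blast
qed

lemma diff_iso_if_irreducible:
  assumes dm1: "diff_module \<phi> sc1 \<Phi>1" and dm2: "diff_module \<phi> sc2 \<Phi>2"
    and irr1: "irreducible_dm sc1 \<Phi>1" and irr2: "irreducible_dm sc2 \<Phi>2"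
    and lin: "Vector_Spaces.linear sc1 sc2 h" and comm: "\<And>m. h (\<Phi>1 m) = \<Phi>2 (h m)"
    and "h x \<noteq> 0"
  shows "diff_iso sc1 \<Phi>1 sc2 \<Phi>2"
proof -
  interpret vector_space_pair sc1 sc2
    using diff_moduleD(1)[OF dm1] diff_moduleD(1)[OF dm2] by (simp add: vector_space_pair_def)
  interpret h: Vector_Spaces.linear sc1 sc2 h
    by (rule lin)
  have "\<Phi>1 ` {m. h m = 0} \<subseteq> {m. h m = 0}"
    using comm diff_moduleD(6)[OF dm2] by auto
  then have "{m. h m = 0} = {0} \<or> {m. h m = 0} = UNIV"
    using irr1 h.subspace_kernel unfolding irreducible_dm_def by blast
  then have "inj h"
    using \<open>h x \<noteq> 0\<close> by (auto simp: h.inj_iff_eq_0)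
  have "\<Phi>2 ` range h \<subseteq> range h"
  proof
    fix y assume "y \<in> \<Phi>2 ` range h"
    then obtain m where "y = \<Phi>2 (h m)"
      by blast
    then show "y \<in> range h"
      by (simp flip: comm)
  qed
  then have "range h = {0} \<or> range h = UNIV"
    using irr2 h.subspace_image[OF vs1.subspace_UNIV] unfolding irreducible_dm_def by blast
  then have "surj h"
    using \<open>h x \<noteq> 0\<close> by (metis rangeI singletonD)
  show ?thesis
    unfolding diff_iso_def using \<open>inj h\<close> \<open>surj h\<close> lin comm by (blast intro: bijI)
qed

section \<open>The module \<open>E(c z\<^bsup>t/n\<^esup>)\<close>\<close>

locale E_module =
  fixes \<tau> :: complex and t :: int and n :: nat and c :: complex
  assumes n: "n \<ge> 1" and c: "c \<noteq> 0"
begin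

abbreviation "sc \<equiv> E_scale n"
abbreviation "\<Phi>\<^sub>E \<equiv> E_Phi \<tau> t n c"

lemma vector_space_E: "vector_space sc"
  by unfold_locales (simp_all add: E_scale_def emb_add[OF n] emb_mult[OF n] emb_1[OF n] algebra_simps)

lemma linear_iff:
  "Vector_Spaces.linear sc sc h \<longleftrightarrow> (\<forall>x y. h (x + y) = h x + h y) \<and> (\<forall>f x. h (sc f x) = sc f (h x))"
  using vector_space_E by (simp add: Vector_Spaces.linear_iff)

lemma Phi_eq: "\<Phi>\<^sub>E m = fls_const c * fls_X_intpow t * fls_twist (qchar \<tau> n) m"
  by (simp add: E_Phi_def sigma_eq_fls_twist)

lemma Phi_add: "\<Phi>\<^sub>E (x + y) = \<Phi>\<^sub>E x + \<Phi>\<^sub>E y"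
  by (simp add: Phi_eq fls_twist_add algebra_simps)

lemma Phi_mult: "\<Phi>\<^sub>E (f * g) = \<Phi>\<^sub>E f * fls_twist (qchar \<tau> n) g"
  by (simp add: Phi_eq fls_twist_mult[OF int_character_qchar] algebra_simps)

lemma Phi_scale: "\<Phi>\<^sub>E (sc f m) = sc (phiK \<tau> f) (\<Phi>\<^sub>E m)"
proof -
  have "fls_twist (qchar \<tau> n) (emb n f) = emb n (fls_twist (qchar \<tau> 1) f)"
    using sigma_emb[OF n, of \<tau> f] by (simp add: sigma_eq_fls_twist)
  then show ?thesis
    by (simp add: E_scale_def Phi_eq sigma_eq_fls_twist fls_twist_mult[OF int_character_qchar]
        algebra_simps)
qed

lemma bij_Phi: "bij \<Phi>\<^sub>E"
proof -
  define a :: "complex fls" where "a = fls_const c * fls_X_intpow t"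
  have "a \<noteq> 0"
    using c by (simp add: a_def fls_mult_fls_X_intpow_nonzero)
  then have "bij (\<lambda>m. a * m)"
    by (intro o_bij[of "\<lambda>m. inverse a * m"]) (auto simp: fun_eq_iff)
  then have "bij ((\<lambda>m. a * m) \<circ> fls_twist (qchar \<tau> n))"
    using bij_fls_twist[OF int_character_qchar] by (rule bij_comp[rotated])
  moreover have "\<Phi>\<^sub>E = (\<lambda>m. a * m) \<circ> fls_twist (qchar \<tau> n)"
    by (rule ext) (simp add: Phi_eq a_def)
  ultimately show ?thesis
    by simp
qed

text \<open>\<open>qprod k\<close> is the constant in \<open>\<Phi>\<^bsup>k\<^esup> 1 = (c\<^bsup>k\<^esup> qprod k) z\<^bsup>tk/n\<^esup>\<close>.\<close>

definition qprod :: "nat \<Rightarrow> complex" where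
  "qprod k = (\<Prod>i<k. qchar \<tau> n (t * int i))"

lemma qprod_nonzero: "qprod k \<noteq> 0"
  by (simp add: qprod_def qchar_nonzero)

lemma Phi_power_1: "(\<Phi>\<^sub>E ^^ k) 1 = fls_const (c ^ k * qprod k) * fls_X_intpow (t * int k)"
proof (induction k)
  case (Suc k)
  have "(\<Phi>\<^sub>E ^^ Suc k) 1 = \<Phi>\<^sub>E (fls_const (c ^ k * qprod k) * fls_X_intpow (t * int k))"
    using Suc by simp
  also have "\<dots> = fls_const c * fls_X_intpow t *
      (fls_const (c ^ k * qprod k) * (fls_const (qchar \<tau> n (t * int k)) * fls_X_intpow (t * int k)))"
    by (simp add: Phi_eq fls_twist_mult[OF int_character_qchar]
        fls_twist_const[OF int_character_qchar] fls_twist_X_intpow)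
  also have "\<dots> = fls_const (c ^ Suc k * qprod (Suc k)) * (fls_X_intpow t * fls_X_intpow (t * int k))"
    by (simp add: qprod_def fls_const_mult_const[symmetric] algebra_simps del: fls_const_mult_const)
  also have "fls_X_intpow t * fls_X_intpow (t * int k) = (fls_X_intpow (t * int (Suc k)) :: complex fls)"
    by (simp add: fls_X_intpow_times_fls_X_intpow algebra_simps)
  finally show ?case .
qed (simp add: qprod_def)

lemma Phi_power_1_nonzero: "(\<Phi>\<^sub>E ^^ k) 1 \<noteq> 0"
  using c qprod_nonzero by (simp add: Phi_power_1 fls_mult_fls_X_intpow_nonzero)

lemma Phi_power_1_subdegree: "fls_subdegree ((\<Phi>\<^sub>E ^^ k) 1) = t * int k"
  using c qprod_nonzero by (simp add: Phi_power_1 fls_subdegree_mult_fls_X_intpow)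

lemma Phi_power_1_scale: "(\<Phi>\<^sub>E ^^ (n * k)) 1 = sc (fls_const (c ^ (n * k) * qprod (n * k)) * fls_X_intpow (t * int k)) 1"
  using n by (simp add: Phi_power_1 E_scale_def emb_mult emb_const emb_X_intpow algebra_simps)

lemma Phi_power: "(\<Phi>\<^sub>E ^^ k) f = (\<Phi>\<^sub>E ^^ k) 1 * fls_twist (\<lambda>j. qchar \<tau> n j ^ k) f"
proof (induction k)
  case (Suc k)
  then show ?case
    by (simp add: Phi_mult fls_twist_twist algebra_simps)
qed (simp add: fls_twist_one)

lemma Phi_power_nonzero: "f \<noteq> 0 \<Longrightarrow> (\<Phi>\<^sub>E ^^ k) f \<noteq> 0"
  using Phi_power_1_nonzero int_character_power[OF int_character_qchar]
  by (subst Phi_power) (simp add: fls_twist_eq_0_iff)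

lemma Phi_power_subdegree: "f \<noteq> 0 \<Longrightarrow> fls_subdegree ((\<Phi>\<^sub>E ^^ k) f) = t * int k + fls_subdegree f"
  using Phi_power_1_nonzero Phi_power_1_subdegree int_character_power[OF int_character_qchar]
  by (subst Phi_power) (simp add: fls_subdegree_twist fls_twist_eq_0_iff)

text \<open>Elements of \<open>K\<close> have valuations in \<open>n\<int>\<close>, so \<open>K\<close>-combinations of elements whose valuations are
  distinct mod \<open>n\<close> cannot cancel.\<close>

lemma independent_if_subdegrees_distinct_mod:
  assumes "finite F" and "0 \<notin> F"
    and distinct: "\<And>x y. x \<in> F \<Longrightarrow> y \<in> F \<Longrightarrow> fls_subdegree x mod int n = fls_subdegree y mod int n \<Longrightarrow> x = y"
  shows "\<not> module.dependent sc F"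
proof
  interpret vector_space sc
    by (rule vector_space_E)
  assume "dependent F"
  then obtain T u where T: "finite T" "T \<subseteq> F" "(\<Sum>v\<in>T. sc (u v) v) = 0" and "\<exists>v\<in>T. u v \<noteq> 0"
    unfolding dependent_explicit by blast
  define T' where "T' = {v\<in>T. u v \<noteq> 0}"
  have "finite T'" and "T' \<noteq> {}"
    using T \<open>\<exists>v\<in>T. u v \<noteq> 0\<close> by (auto simp: T'_def)
  have nonzero: "v \<noteq> 0" "emb n (u v) \<noteq> 0" if "v \<in> T'" for v
    using that assms(2) T(2) unfolding T'_def by (auto simp: emb_eq_0_iff[OF n])
  have "(\<Sum>v\<in>T'. emb n (u v) * v) = (\<Sum>v\<in>T. sc (u v) v)"
    unfolding T'_def E_scale_def
    by (rule sum.mono_neutral_left) (use T in \<open>auto simp: emb_eq_0_iff[OF n]\<close>)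
  also have "\<dots> = 0"
    using T(3) .
  finally have "(\<Sum>v\<in>T'. emb n (u v) * v) = 0" .
  have subdegree: "fls_subdegree (emb n (u v) * v) = int n * fls_subdegree (u v) + fls_subdegree v"
    if "v \<in> T'" for v
    using nonzero[OF that] by (simp add: fls_subdegree_emb[OF n])
  have inj: "inj_on (\<lambda>v. fls_subdegree (emb n (u v) * v)) T'"
  proof (rule inj_onI)
    fix x y assume xy: "x \<in> T'" "y \<in> T'"
      "fls_subdegree (emb n (u x) * x) = fls_subdegree (emb n (u y) * y)"
    then have "(int n * fls_subdegree (u x) + fls_subdegree x) mod int n =
        (int n * fls_subdegree (u y) + fls_subdegree y) mod int n"
      by (simp only: subdegree)
    then have "fls_subdegree x mod int n = fls_subdegree y mod int n"
      by simp
    then show "x = y"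
      using distinct xy(1,2) T(2) unfolding T'_def by auto
  qed
  have "emb n (u v) * v \<noteq> 0" if "v \<in> T'" for v
    using nonzero[OF that] by simp
  from sum_nonzero_if_subdegrees_distinct[OF \<open>finite T'\<close> \<open>T' \<noteq> {}\<close> this inj]
  show False
    using \<open>(\<Sum>v\<in>T'. emb n (u v) * v) = 0\<close> by simp
qed

lemma span_X_intpow: "module.span sc ((\<lambda>j. fls_X_intpow (int j)) ` {..<n}) = UNIV"
proof -
  interpret vector_space sc
    by (rule vector_space_E)
  have "(\<Sum>j<n. sc (fls_residue_part n j f) (fls_X_intpow (int j))) \<in> span ((\<lambda>j. fls_X_intpow (int j)) ` {..<n})"
    for f
    by (intro span_sum span_scale span_base) auto
  then show ?thesis
    using fls_residue_decomposition[OF n] unfolding E_scale_def by auto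
qed

lemma card_X_intpow: "card ((\<lambda>j. fls_X_intpow (int j) :: complex fls) ` {..<n}) = n"
proof -
  have "inj_on (\<lambda>j. fls_X_intpow (int j) :: complex fls) {..<n}"
    by (rule inj_onI) (metis fls_subdegree_fls_X_intpow of_nat_eq_iff)
  then show ?thesis
    by (simp add: card_image)
qed

lemma independent_X_intpow: "\<not> module.dependent sc ((\<lambda>j. fls_X_intpow (int j)) ` {..<n})"
  by (rule independent_if_subdegrees_distinct_mod) auto

lemma dim_E: "vector_space.dim sc (UNIV :: complex fls set) = n"
proof -
  interpret vector_space sc
    by (rule vector_space_E)
  have "span ((\<lambda>j. fls_X_intpow (int j)) ` {..<n}) = span UNIV"
    using span_X_intpow span_UNIV by simp
  then show ?thesis
    using dim_eq_card[OF _ independent_X_intpow] card_X_intpow by simp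
qed

lemma diff_module_E: "diff_module (phiK \<tau>) sc \<Phi>\<^sub>E"
  unfolding diff_module_def using vector_space_E span_X_intpow bij_Phi Phi_add Phi_scale
  by (blast intro: finite_imageI)

text \<open>Coprimality makes the valuations \<open>tk + v(s)\<close>, \<open>k < n\<close>, distinct mod \<open>n\<close>: the first \<open>n\<close> iterates of
  any nonzero element form a basis.\<close>

lemma iterates_basis_E:
  assumes "coprime t (int n)" and "s \<noteq> 0"
  shows "iterates_basis sc \<Phi>\<^sub>E s n"
proof -
  have distinct: "k = k'" if "k < n" "k' < n"
      "fls_subdegree ((\<Phi>\<^sub>E ^^ k) s) mod int n = fls_subdegree ((\<Phi>\<^sub>E ^^ k') s) mod int n" for k k'
    using coprime_mult_mod_inj[OF assms(1) that(1,2)] that(3) by (simp add: Phi_power_subdegree[OF assms(2)])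
  have inj: "inj_on (\<lambda>k. (\<Phi>\<^sub>E ^^ k) s) {..<n}"
    using distinct by (intro inj_onI) auto
  have indep: "\<not> module.dependent sc (iterates \<Phi>\<^sub>E s n)"
    using distinct Phi_power_nonzero[OF assms(2)]
    by (intro independent_if_subdegrees_distinct_mod) (auto simp: iterates_def)
  moreover have "card (iterates \<Phi>\<^sub>E s n) = n"
    using inj by (simp add: iterates_def card_image)
  ultimately have "module.span sc (iterates \<Phi>\<^sub>E s n) = UNIV"
    using vector_space.independent_card_ge_imp_span_UNIV[OF vector_space_E _ span_X_intpow]
      card_X_intpow by simp
  with inj indep show ?thesis
    unfolding iterates_basis_def by blast
qed

lemma irreducible_E:
  assumes "coprime t (int n)"
  shows "irreducible_dm sc \<Phi>\<^sub>E"
  unfolding irreducible_dm_def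
proof (intro conjI allI impI)
  show "\<exists>m::complex fls. m \<noteq> 0"
    by (intro exI[of _ 1]) simp
  fix S assume S: "module.subspace sc S \<and> \<Phi>\<^sub>E ` S \<subseteq> S"
  interpret vector_space sc
    by (rule vector_space_E)
  show "S = {0} \<or> S = UNIV"
  proof (cases "S = {0}")
    case False
    then obtain s where s: "s \<in> S" "s \<noteq> 0"
      using S subspace_0 by blast
    have "(\<Phi>\<^sub>E ^^ k) s \<in> S" for k
      by (induction k) (use S s in auto)
    then have "span (iterates \<Phi>\<^sub>E s n) \<subseteq> S"
      using S by (intro span_minimal) (auto simp: iterates_def)
    then show ?thesis
      using iterates_basis_E[OF assms s(2)] by (auto simp: iterates_basis_def)
  qed simp
qed

lemma pure_E:
  assumes "coprime t (int n)"
  shows "pure_of_slope sc \<Phi>\<^sub>E (of_int t / of_nat n)"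
proof -
  define a0 where "a0 = - (fls_const (c ^ n * qprod n) * fls_X_intpow t)"
  define a where "a i = (if i = 0 then a0 else 0)" for i :: nat
  have a0: "a0 \<noteq> 0" "fls_subdegree a0 = t"
    using c qprod_nonzero
    by (simp_all add: a0_def fls_mult_fls_X_intpow_nonzero fls_subdegree_mult_fls_X_intpow)
  have "(\<Sum>i<n. sc (a i) ((\<Phi>\<^sub>E ^^ i) 1)) = (\<Sum>i<n. if i = 0 then sc a0 1 else 0)"
    by (rule sum.cong) (auto simp: a_def E_scale_def emb_eq_0_iff[OF n])
  then have "(\<Phi>\<^sub>E ^^ n) 1 + (\<Sum>i<n. sc (a i) ((\<Phi>\<^sub>E ^^ i) 1)) = 0"
    using n Phi_power_1_scale[of 1] by (simp add: a0_def E_scale_def emb_uminus[OF n])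
  moreover have "(of_nat n :: rat) \<noteq> 0"
    using n by simp
  ultimately show ?thesis
    using n a0 iterates_basis_E[OF assms, of 1] unfolding pure_of_slope_def iterates_basis_def iterates_def
    by (intro exI[of _ n] exI[of _ a] exI[of _ 1]) (auto simp: a_def)
qed

end

context E_module
begin

lemma linear_scale_const: "Vector_Spaces.linear sc sc (sc (fls_const a))"
  unfolding linear_iff E_scale_def by (simp add: emb_const[OF n] algebra_simps)

lemma Phi_scale_const: "\<Phi>\<^sub>E (sc (fls_const a) m) = sc (fls_const a) (\<Phi>\<^sub>E m)"
  by (simp add: E_scale_def emb_const[OF n] Phi_eq fls_twist_mult[OF int_character_qchar]
      fls_twist_const[OF int_character_qchar] algebra_simps)

text \<open>An endomorphism is determined by \<open>g = h 1\<close>; commuting with \<open>\<Phi>\<^bsup>n\<^esup>\<close>, which acts on \<open>1\<close> by a scalar of \<open>K\<close>,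
  forces \<open>\<sigma>\<^bsup>n\<^esup> g = g\<close>, and since \<open>|q\<^bsup>k\<^esup>| \<noteq> 1\<close> for \<open>k \<noteq> 0\<close> this makes \<open>g\<close> constant.\<close>

lemma diff_End_E:
  assumes "Im \<tau> > 0" and "coprime t (int n)"
  shows "diff_End sc \<Phi>\<^sub>E = range (\<lambda>a::complex. sc (fls_const a))"
proof (intro equalityI subsetI)
  fix h assume "h \<in> range (\<lambda>a::complex. sc (fls_const a))"
  then show "h \<in> diff_End sc \<Phi>\<^sub>E"
    unfolding diff_End_def using linear_scale_const Phi_scale_const by auto
next
  fix h assume "h \<in> diff_End sc \<Phi>\<^sub>E"
  then have lin: "Vector_Spaces.linear sc sc h" and comm: "\<And>m. h (\<Phi>\<^sub>E m) = \<Phi>\<^sub>E (h m)"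
    unfolding diff_End_def by auto
  define g where "g = h 1"
  define A where "A = fls_const (c ^ n * qprod n) * fls_X_intpow t"
  have "(\<Phi>\<^sub>E ^^ n) 1 = sc A 1"
    using Phi_power_1_scale[of 1] by (simp add: A_def)
  then have "(\<Phi>\<^sub>E ^^ n) g = sc A g"
    unfolding g_def by (rule diff_hom_iterate_eq_scale[of h "\<Phi>\<^sub>E" "\<Phi>\<^sub>E", OF comm lin])
  also have "sc A g = (\<Phi>\<^sub>E ^^ n) 1 * g"
    using \<open>(\<Phi>\<^sub>E ^^ n) 1 = sc A 1\<close> by (simp add: E_scale_def)
  finally have "fls_twist (\<lambda>j. qchar \<tau> n j ^ n) g = g"
    using Phi_power_1_nonzero[of n] by (subst (asm) Phi_power) simp
  then have g: "g = fls_const (g $$ 0)"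
    using qchar_power_self_neq_1[OF assms(1) n] by (rule fls_twist_fixed_imp_const)
  have "h m = sc (fls_const (g $$ 0)) m" for m
  proof (rule vector_space_pair.linear_eq_on[OF _ lin linear_scale_const])
    show "vector_space_pair sc sc"
      by (simp add: vector_space_pair_def vector_space_E)
    show "m \<in> module.span sc (iterates \<Phi>\<^sub>E 1 n)"
      using iterates_basis_E[OF assms(2), of 1] by (simp add: iterates_basis_def)
  next
    fix b assume "b \<in> iterates \<Phi>\<^sub>E 1 n"
    then obtain k where b: "b = (\<Phi>\<^sub>E ^^ k) 1"
      by (auto simp: iterates_def)
    have "h b = (\<Phi>\<^sub>E ^^ k) g"
      unfolding b g_def by (rule funpow_intertwine[of h "\<Phi>\<^sub>E" "\<Phi>\<^sub>E", OF comm])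
    also have "\<dots> = (\<Phi>\<^sub>E ^^ k) 1 * fls_const (g $$ 0)"
      by (subst g, subst Phi_power)
        (simp add: fls_twist_const[OF int_character_power[OF int_character_qchar]])
    finally show "h b = sc (fls_const (g $$ 0)) b"
      unfolding b E_scale_def by (simp add: emb_const[OF n])
  qed
  then show "h \<in> range (\<lambda>a::complex. sc (fls_const a))"
    by auto
qed

lemma diff_iso_shift:
  "diff_iso sc \<Phi>\<^sub>E (E_scale n) (E_Phi \<tau> t n (c / qchar \<tau> n k))"
proof -
  define H where "H m = fls_X_intpow k * m" for m :: "complex fls"
  have lin: "Vector_Spaces.linear sc sc H"
    unfolding linear_iff H_def E_scale_def by (simp add: algebra_simps)
  have "H (\<Phi>\<^sub>E m) = E_Phi \<tau> t n (c / qchar \<tau> n k) (H m)" for m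
  proof -
    have "E_Phi \<tau> t n (c / qchar \<tau> n k) (H m) =
        fls_const (c / qchar \<tau> n k) * fls_const (qchar \<tau> n k) * fls_X_intpow k *
        (fls_X_intpow t * fls_twist (qchar \<tau> n) m)"
      unfolding E_Phi_def sigma_eq_fls_twist H_def
      by (simp add: fls_twist_mult[OF int_character_qchar] fls_twist_X_intpow algebra_simps)
    also have "fls_const (c / qchar \<tau> n k) * fls_const (qchar \<tau> n k) = fls_const c"
      using qchar_nonzero by (simp add: fls_const_mult_const)
    finally show ?thesis
      unfolding H_def Phi_eq by (simp add: algebra_simps)
  qed
  moreover have "bij H"
  proof -
    have "fls_X_intpow (-k) * fls_X_intpow k = (1::complex fls)"
      and "fls_X_intpow k * fls_X_intpow (-k) = (1::complex fls)"
      using fls_X_intpow_times_fls_X_intpow[of "-k" k, where 'a=complex]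
        fls_X_intpow_times_fls_X_intpow[of k "-k", where 'a=complex] by simp_all
    then have "fls_X_intpow (-k) * (fls_X_intpow k * m) = m"
      and "fls_X_intpow k * (fls_X_intpow (-k) * m) = m" for m :: "complex fls"
      by (simp_all only: mult.assoc[symmetric] mult_1_left)
    then show ?thesis
      unfolding H_def by (intro o_bij[of "\<lambda>m. fls_X_intpow (-k) * m"]) auto
  qed
  ultimately show ?thesis
    unfolding diff_iso_def using lin by blast
qed

lemma emb_mult_Phi_power_1_nth:
  "(emb n f * (\<Phi>\<^sub>E ^^ i) 1) $$ m = c ^ i * qprod i *
     (if int n dvd (m - t * int i) then f $$ ((m - t * int i) div int n) else 0)"
proof -
  have "emb n f * (\<Phi>\<^sub>E ^^ i) 1 = fls_const (c ^ i * qprod i) * fls_X_intpow (t * int i) * emb n f"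
    by (simp add: Phi_power_1 algebra_simps)
  then show ?thesis
    by (simp only: fls_const_X_intpow_mult_nth emb_nth[OF n])
qed

lemma emb_mult_Phi_power_1_nth_below:
  assumes "f \<noteq> 0 \<Longrightarrow> \<omega> \<le> int n * fls_subdegree f + t * int i" and "m < \<omega>"
  shows "(emb n f * (\<Phi>\<^sub>E ^^ i) 1) $$ m = 0"
proof (cases "f \<noteq> 0 \<and> int n dvd (m - t * int i)")
  case True
  then obtain k where k: "m - t * int i = int n * k"
    by blast
  have "int n * k < int n * fls_subdegree f"
    using assms True k by linarith
  then have "k < fls_subdegree f"
    using n by (simp add: mult_less_cancel_left)
  then show ?thesis
    using n by (simp add: emb_mult_Phi_power_1_nth k)
qed (auto simp: emb_mult_Phi_power_1_nth)

lemma difference_operator_eq_twisted_sum: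
  "(\<Phi>\<^sub>E ^^ d) g + (\<Sum>i<d. sc (a i) ((\<Phi>\<^sub>E ^^ i) g)) =
    (\<Sum>i\<le>d. (emb n (if i < d then a i else 1) * (\<Phi>\<^sub>E ^^ i) 1) * fls_twist (\<lambda>j. qchar \<tau> n j ^ i) g)"
  by (simp add: lessThan_Suc_atMost[symmetric] E_scale_def emb_1[OF n] mult.assoc Phi_power[of _ g])

end

lemma exists_root_power_int:
  fixes \<zeta> :: "'a::field"
  assumes "coprime t (int n)" and "\<zeta> \<noteq> 0" and "\<zeta> ^ n = 1"
  obtains \<eta> where "\<eta> \<noteq> 0" and "\<eta> powi t = \<zeta>" and "\<And>m. \<eta> powi (int n * m) = 1"
proof -
  obtain u v where uv: "u * t + v * int n = 1"
    using bezout_int[of t "int n"] assms(1) by (auto simp: coprime_iff_gcd_eq_1)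
  have \<zeta>_multiple: "\<zeta> powi (int n * m) = 1" for m
    by (simp add: power_int_mult assms(3))
  have nonzero: "\<zeta> powi u \<noteq> 0"
    using assms(2) by simp
  have multiple: "(\<zeta> powi u) powi (int n * m) = 1" for m
    using \<zeta>_multiple[of "u * m"] by (simp add: power_int_mult mult.left_commute)
  have "u * t = 1 + int n * (- v)"
    using uv by (simp add: algebra_simps)
  then have "(\<zeta> powi u) powi t = \<zeta> powi (1 + int n * (- v))"
    by (simp flip: power_int_mult)
  also have "\<dots> = \<zeta>"
    using power_int_add[of \<zeta> 1 "int n * (- v)"] assms(2) \<zeta>_multiple[of "- v"] by simp
  finally show ?thesis
    by (rule that[OF nonzero _ multiple])
qed

text \<open>If \<open>c'\<^bsup>n\<^esup> = c\<^bsup>n\<^esup>\<close>, write \<open>c'/c = \<eta>\<^bsup>t\<^esup>\<close> with \<open>\<eta>\<^bsup>n\<^esup> = 1\<close>; then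
  \<open>z\<^bsup>k/n\<^esup> \<mapsto> \<eta>\<^bsup>k\<^esup> z\<^bsup>k/n\<^esup>\<close> fixes \<open>K\<close> and conjugates \<open>\<Phi>\<close> for \<open>c\<close> into \<open>\<Phi>\<close> for \<open>c'\<close>.\<close>

lemma diff_iso_E_if_power_eq:
  assumes n: "n \<ge> 1" and cop: "coprime t (int n)" and c: "c \<noteq> 0" and eq: "c ^ n = c' ^ n"
  shows "diff_iso (E_scale n) (E_Phi \<tau> t n c) (E_scale n) (E_Phi \<tau> t n c')"
proof -
  interpret E_module \<tau> t n c
    using n c by unfold_locales
  have "c' \<noteq> 0"
    using eq c n by (metis power_0_left power_eq_0_iff not_one_le_zero)
  then have "c' / c \<noteq> 0" and "(c' / c) ^ n = 1"
    using eq c by (simp_all add: power_divide)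
  then obtain \<eta> where "\<eta> \<noteq> 0" and \<eta>_t: "\<eta> powi t = c' / c" and \<eta>_multiple: "\<And>m. \<eta> powi (int n * m) = 1"
    using exists_root_power_int[OF cop] by metis
  define \<chi> where "\<chi> k = \<eta> powi k" for k
  have \<chi>: "int_character \<chi>"
    unfolding \<chi>_def using \<open>\<eta> \<noteq> 0\<close> by (rule int_character_power_int)
  have fix_K: "fls_twist \<chi> (emb n f) = emb n f" for f
  proof (rule fls_eqI)
    fix k
    show "fls_twist \<chi> (emb n f) $$ k = emb n f $$ k"
      using \<eta>_multiple by (cases "int n dvd k") (auto simp: emb_nth[OF n] \<chi>_def)
  qed
  have lin: "Vector_Spaces.linear (E_scale n) (E_scale n) (fls_twist \<chi>)"
    unfolding linear_iff E_scale_def by (simp add: fls_twist_add fls_twist_mult[OF \<chi>] fix_K)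
  have "fls_twist \<chi> (E_Phi \<tau> t n c m) = E_Phi \<tau> t n c' (fls_twist \<chi> m)" for m
  proof -
    have "fls_twist \<chi> (E_Phi \<tau> t n c m) =
        fls_const (c * \<chi> t) * fls_X_intpow t * fls_twist (qchar \<tau> n) (fls_twist \<chi> m)"
      by (simp add: Phi_eq fls_twist_mult[OF \<chi>] fls_twist_const[OF \<chi>] fls_twist_X_intpow
          fls_twist_twist mult.commute fls_const_mult_const[symmetric] mult.left_commute
          del: fls_const_mult_const)
    also have "c * \<chi> t = c'"
      using c by (simp add: \<chi>_def \<eta>_t)
    finally show ?thesis
      by (simp add: E_Phi_def sigma_eq_fls_twist)
  qed
  then show ?thesis
    unfolding diff_iso_def using lin bij_fls_twist[OF \<chi>] by blast
qed

section \<open>Solving a difference equation in \<open>K\<^sub>n\<close>\<close>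

fun triangular_solve :: "(nat \<Rightarrow> nat \<Rightarrow> 'a::field) \<Rightarrow> nat \<Rightarrow> 'a" where
  "triangular_solve D K =
     (if K = 0 then 1 else - (\<Sum>k<K. D K k * triangular_solve D k) / D K K)"

declare triangular_solve.simps [simp del]

lemma triangular_solve_0: "triangular_solve D 0 = 1"
  by (simp add: triangular_solve.simps)

lemma triangular_solve_eq:
  assumes "K \<ge> 1" and "D K K \<noteq> 0"
  shows "(\<Sum>k\<le>K. D K k * triangular_solve D k) = 0"
proof -
  have "(\<Sum>k\<le>K. D K k * triangular_solve D k) =
      (\<Sum>k<K. D K k * triangular_solve D k) + D K K * triangular_solve D K"
    by (simp add: lessThan_Suc_atMost[symmetric])
  also have "\<dots> = 0"
    using assms by (subst (2) triangular_solve.simps) simp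
  finally show ?thesis .
qed

lemma fls_times_nth_lower_bounds:
  fixes f h :: "'a::comm_ring_1 fls"
  assumes "\<And>m. m < L \<Longrightarrow> f $$ m = 0" and "\<And>m. m < L' \<Longrightarrow> h $$ m = 0"
  shows "(f * h) $$ N = (\<Sum>i = L..N - L'. f $$ i * h $$ (N - i))"
proof (cases "f = 0 \<or> h = 0")
  case False
  then have "L \<le> fls_subdegree f" and "L' \<le> fls_subdegree h"
    using assms nth_fls_subdegree_nonzero by (metis not_le)+
  then show ?thesis
    unfolding fls_times_nth(2)
    by (intro sum.mono_neutral_left) (auto simp: not_le)
qed auto

lemma sum_atLeastAtMost_int_reflect:
  fixes h :: "int \<Rightarrow> 'a::comm_monoid_add"
  shows "(\<Sum>j = w..w + int K. h j) = (\<Sum>k\<le>K. h (w + int K - int k))"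
proof -
  have "bij_betw (\<lambda>k. w + int K - int k) {..K} {w..w + int K}"
  proof (rule bij_betw_imageI)
    show "inj_on (\<lambda>k. w + int K - int k) {..K}"
      by (auto simp: inj_on_def)
    show "(\<lambda>k. w + int K - int k) ` {..K} = {w..w + int K}"
    proof (intro equalityI subsetI)
      fix j assume "j \<in> {w..w + int K}"
      then have "j = w + int K - int (nat (w + int K - j))" and "nat (w + int K - j) \<in> {..K}"
        by auto
      then show "j \<in> (\<lambda>k. w + int K - int k) ` {..K}"
        by blast
    qed auto
  qed
  from sum.reindex_bij_betw[OF this, of h] show ?thesis
    by simp
qed

lemma twisted_sum_nth:
  fixes F :: "nat \<Rightarrow> 'a::field fls"
  assumes F: "\<And>i m. i \<le> d \<Longrightarrow> m < \<omega> \<Longrightarrow> F i $$ m = 0" and g: "\<And>m. m < 0 \<Longrightarrow> g $$ m = 0"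
  shows "N < \<omega> \<Longrightarrow> (\<Sum>i\<le>d. F i * fls_twist (\<lambda>j. \<chi> j ^ i) g) $$ N = 0"
    and "(\<Sum>i\<le>d. F i * fls_twist (\<lambda>j. \<chi> j ^ i) g) $$ (\<omega> + int K) =
      (\<Sum>k\<le>K. (\<Sum>i\<le>d. F i $$ (\<omega> + int K - int k) * \<chi> (int k) ^ i) * g $$ int k)"
proof -
  have prod: "(F i * fls_twist (\<lambda>j. \<chi> j ^ i) g) $$ N =
      (\<Sum>j = \<omega>..N - 0. F i $$ j * fls_twist (\<lambda>j. \<chi> j ^ i) g $$ (N - j))" if "i \<le> d" for i N
    by (rule fls_times_nth_lower_bounds) (use F[OF that] g in auto)
  show "N < \<omega> \<Longrightarrow> (\<Sum>i\<le>d. F i * fls_twist (\<lambda>j. \<chi> j ^ i) g) $$ N = 0"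
    by (simp add: fls_nth_sum prod)
  have "(\<Sum>i\<le>d. F i * fls_twist (\<lambda>j. \<chi> j ^ i) g) $$ (\<omega> + int K) =
      (\<Sum>i\<le>d. \<Sum>k\<le>K. F i $$ (\<omega> + int K - int k) * (\<chi> (int k) ^ i * g $$ int k))"
    by (simp add: fls_nth_sum prod sum_atLeastAtMost_int_reflect)
  also have "\<dots> = (\<Sum>k\<le>K. (\<Sum>i\<le>d. F i $$ (\<omega> + int K - int k) * \<chi> (int k) ^ i) * g $$ int k)"
    by (subst sum.swap) (simp add: sum_distrib_right mult.assoc)
  finally show "(\<Sum>i\<le>d. F i * fls_twist (\<lambda>j. \<chi> j ^ i) g) $$ (\<omega> + int K) =
      (\<Sum>k\<le>K. (\<Sum>i\<le>d. F i $$ (\<omega> + int K - int k) * \<chi> (int k) ^ i) * g $$ int k)" .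
qed

text \<open>If the indicial polynomial \<open>P(x) = \<Sum>\<^sub>i F\<^sub>i[\<omega>] x\<^sup>i\<close> vanishes at \<open>\<chi>(0)\<close> but at no \<open>\<chi>(K)\<close>, \<open>K \<ge> 1\<close>,
  the coefficients of a solution \<open>g = 1 + g\<^sub>1 w + \<dots>\<close> can be solved for one at a time.\<close>

lemma exists_twisted_sum_eq_0:
  fixes F :: "nat \<Rightarrow> 'a::field fls"
  assumes F: "\<And>i m. i \<le> d \<Longrightarrow> m < \<omega> \<Longrightarrow> F i $$ m = 0"
    and root: "(\<Sum>i\<le>d. F i $$ \<omega> * \<chi> 0 ^ i) = 0"
    and nonroot: "\<And>K. K \<ge> 1 \<Longrightarrow> (\<Sum>i\<le>d. F i $$ \<omega> * \<chi> (int K) ^ i) \<noteq> 0"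
  obtains g where "g \<noteq> 0" and "(\<Sum>i\<le>d. F i * fls_twist (\<lambda>j. \<chi> j ^ i) g) = 0"
proof -
  define D where "D K k = (\<Sum>i\<le>d. F i $$ (\<omega> + int K - int k) * \<chi> (int k) ^ i)" for K k
  define g where "g = Abs_fls (\<lambda>k. if k \<ge> 0 then triangular_solve D (nat k) else 0)"
  have g_nth: "g $$ k = (if k \<ge> 0 then triangular_solve D (nat k) else 0)" for k
    unfolding g_def by (rule nth_Abs_fls_lower_bound[of 0]) auto
  have "g \<noteq> 0"
    using g_nth[of 0] by (auto simp: triangular_solve_0)
  moreover have coeff: "(\<Sum>i\<le>d. F i * fls_twist (\<lambda>j. \<chi> j ^ i) g) $$ N = 0" for N
  proof (cases "N < \<omega>")
    case False
    define K where "K = nat (N - \<omega>)"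
    have N: "N = \<omega> + int K"
      using False by (simp add: K_def)
    have "(\<Sum>k\<le>K. D K k * triangular_solve D k) = 0"
    proof (cases "K = 0")
      case True
      then show ?thesis
        using root by (simp add: D_def triangular_solve_0)
    next
      case False
      then show ?thesis
        using nonroot[of K] by (intro triangular_solve_eq) (simp_all add: D_def)
    qed
    then show ?thesis
      unfolding N by (subst twisted_sum_nth(2)[OF F]) (simp_all add: g_nth D_def)
  qed (rule twisted_sum_nth(1)[OF F]; simp add: g_nth)
  moreover have "(\<Sum>i\<le>d. F i * fls_twist (\<lambda>j. \<chi> j ^ i) g) = 0"
    by (rule fls_eqI) (simp only: coeff fls_zero_nth)
  ultimately show ?thesis
    using that by blast
qed


lemma of_int_frac_le_iff:
  fixes a b c e :: int
  assumes "b > 0" and "e > 0"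
  shows "(of_int a / of_int b :: rat) \<le> of_int c / of_int e \<longleftrightarrow> a * e \<le> c * b"
proof -
  have "(of_int a / of_int b :: rat) \<le> of_int c / of_int e \<longleftrightarrow>
      (of_int a * of_int e :: rat) \<le> of_int c * of_int b"
    using assms by (simp add: field_simps)
  then show ?thesis
    by (simp only: of_int_mult[symmetric] of_int_le_iff)
qed

lemma of_int_frac_eq_iff:
  fixes a b c e :: int
  assumes "b > 0" and "e > 0"
  shows "(of_int a / of_int b :: rat) = of_int c / of_int e \<longleftrightarrow> a * e = c * b"
proof -
  have "(of_int a / of_int b :: rat) = of_int c / of_int e \<longleftrightarrow>
      (of_int a * of_int e :: rat) = of_int c * of_int b"
    using assms by (simp add: field_simps)
  then show ?thesis
    by (simp only: of_int_mult[symmetric] of_int_eq_iff)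
qed

text \<open>Among the points \<open>(i, v i)\<close>, \<open>i \<in> I\<close>, to the right of \<open>(i\<^sub>0, v i\<^sub>0)\<close>, one for which the descent
  \<open>(v i\<^sub>0 - v i)/(i - i\<^sub>0)\<close> is maximal, equal to \<open>t/n\<close> in lowest terms, lies on a line through
  \<open>(i\<^sub>0, v i\<^sub>0)\<close> below all of them.\<close>

lemma exists_supporting_line:
  fixes v :: "nat \<Rightarrow> int"
  assumes "finite I" and "I \<noteq> {}" and right: "\<And>i. i \<in> I \<Longrightarrow> i0 < i"
  obtains t n i1 where "n \<ge> 1" and "coprime t (int n)" and "i1 \<in> I"
    and "int n * v i1 + t * int i1 = int n * v i0 + t * int i0"
    and "\<And>i. i \<in> I \<Longrightarrow> int n * v i + t * int i \<ge> int n * v i0 + t * int i0"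
proof -
  define slope where "slope i = (of_int (v i0 - v i) / of_int (int i - int i0) :: rat)" for i
  have "Max (slope ` I) \<in> slope ` I"
    using assms(1,2) by (intro Max_in) auto
  then obtain i1 where i1: "i1 \<in> I" and slope_i1: "slope i1 = Max (slope ` I)"
    by (metis imageE)
  obtain t n0 where q: "quotient_of (slope i1) = (t, n0)"
    by (cases "quotient_of (slope i1)") auto
  have "n0 > 0" and "coprime t n0" and slope_tn: "slope i1 = of_int t / of_int n0"
    using quotient_of_denom_pos[OF q] quotient_of_coprime[OF q] quotient_of_div[OF q] by auto
  define n where "n = nat n0"
  have n: "int n = n0"
    using \<open>n0 > 0\<close> by (simp add: n_def)
  have "int n * v i + t * int i \<ge> int n * v i0 + t * int i0" if "i \<in> I" for i
  proof -
    have pos: "int i - int i0 > 0"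
      using right[OF that] by simp
    have "slope i \<le> slope i1"
      using assms(1) that slope_i1 by simp
    then have "of_int (v i0 - v i) / of_int (int i - int i0) \<le> (of_int t / of_int n0 :: rat)"
      unfolding slope_tn by (simp only: slope_def)
    then have "(v i0 - v i) * n0 \<le> t * (int i - int i0)"
      by (rule of_int_frac_le_iff[OF pos \<open>n0 > 0\<close>, THEN iffD1])
    then show ?thesis
      by (simp add: n algebra_simps)
  qed
  moreover have "int n * v i1 + t * int i1 = int n * v i0 + t * int i0"
  proof -
    have pos: "int i1 - int i0 > 0"
      using right[OF i1] by simp
    have "of_int (v i0 - v i1) / of_int (int i1 - int i0) = (of_int t / of_int n0 :: rat)"
      using slope_tn by (simp only: slope_def)
    then have "(v i0 - v i1) * n0 = t * (int i1 - int i0)"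
      by (rule of_int_frac_eq_iff[OF pos \<open>n0 > 0\<close>, THEN iffD1])
    then show ?thesis
      by (simp add: n algebra_simps)
  qed
  moreover have "n \<ge> 1" and "coprime t (int n)"
    using \<open>n0 > 0\<close> \<open>coprime t n0\<close> n by auto
  ultimately show ?thesis
    using that i1 by blast
qed

text \<open>The first edge of the Newton polygon of \<open>\<Sum>\<^sub>i b\<^sub>i \<Phi>\<^sup>i\<close>, of slope \<open>t/n\<close>, joins the lowest index
  \<open>i\<^sub>0\<close> with \<open>b\<^sub>i\<^sub>0 \<noteq> 0\<close> to some \<open>i\<^sub>1 > i\<^sub>0\<close>; \<open>n v(b\<^sub>i) + t i\<close> attains its minimum \<open>\<omega>\<close> at both ends.\<close>

lemma newton_polygon_first_edge:
  fixes b :: "nat \<Rightarrow> 'a::zero fls"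
  assumes "b d \<noteq> 0" and "\<exists>i<d. b i \<noteq> 0"
  obtains t n i0 i1 \<omega> where "n \<ge> 1" and "coprime t (int n)" and "i0 < i1" and "i1 \<le> d"
    and "b i0 \<noteq> 0" and "b i1 \<noteq> 0" and "\<forall>i<i0. b i = 0"
    and "\<omega> = int n * fls_subdegree (b i0) + t * int i0"
    and "\<omega> = int n * fls_subdegree (b i1) + t * int i1"
    and "\<forall>i\<le>d. b i \<noteq> 0 \<longrightarrow> int n * fls_subdegree (b i) + t * int i \<ge> \<omega>"
proof -
  define A where "A = {i. i \<le> d \<and> b i \<noteq> 0}"
  have "finite A" and "d \<in> A"
    using assms(1) by (simp_all add: A_def)
  define i0 where "i0 = Min A"
  have i0: "i0 \<in> A" and i0_min: "\<And>i. i \<in> A \<Longrightarrow> i0 \<le> i"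
    unfolding i0_def using \<open>finite A\<close> \<open>d \<in> A\<close> by (auto intro: Min_in)
  obtain j where "j < d" "b j \<noteq> 0"
    using assms(2) by blast
  then have "i0 < d"
    using i0_min[of j] by (simp add: A_def)
  have below_i0: "\<forall>i<i0. b i = 0"
  proof (intro allI impI)
    fix i assume "i < i0"
    then show "b i = 0"
      using i0_min[of i] \<open>i0 < d\<close> by (auto simp: A_def)
  qed
  define I where "I = {i \<in> A. i0 < i}"
  have "finite I" and "I \<noteq> {}"
    using \<open>finite A\<close> \<open>d \<in> A\<close> \<open>i0 < d\<close> by (auto simp: I_def)
  then obtain t n i1 where "n \<ge> 1" and "coprime t (int n)" and i1: "i1 \<in> I"
    and edge: "int n * fls_subdegree (b i1) + t * int i1 = int n * fls_subdegree (b i0) + t * int i0"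
    and above: "\<And>i. i \<in> I \<Longrightarrow>
      int n * fls_subdegree (b i) + t * int i \<ge> int n * fls_subdegree (b i0) + t * int i0"
    by (rule exists_supporting_line[where v = "\<lambda>i. fls_subdegree (b i)"]) (auto simp: I_def)
  have "\<forall>i\<le>d. b i \<noteq> 0 \<longrightarrow>
      int n * fls_subdegree (b i) + t * int i \<ge> int n * fls_subdegree (b i0) + t * int i0"
    using i0_min above by (auto simp: A_def I_def order.order_iff_strict)
  with that \<open>n \<ge> 1\<close> \<open>coprime t (int n)\<close> i0 i1 below_i0 edge show ?thesis
    by (auto simp: A_def I_def)
qed

lemma exists_root_of_minimal_modulus:
  fixes Q :: "nat \<Rightarrow> complex"
  assumes "i0 < i1" and "i1 \<le> d" and "Q i0 \<noteq> 0" and "Q i1 \<noteq> 0" and "\<And>i. i < i0 \<Longrightarrow> Q i = 0"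
  obtains c where "c \<noteq> 0" and "(\<Sum>i\<le>d. Q i * c ^ i) = 0"
    and "\<And>x. x \<noteq> 0 \<Longrightarrow> norm x < norm c \<Longrightarrow> (\<Sum>i\<le>d. Q i * x ^ i) \<noteq> 0"
proof -
  define P where "P = (\<Sum>j\<le>d - i0. monom (Q (i0 + j)) j)"
  have P_eval: "(\<Sum>i\<le>d. Q i * x ^ i) = x ^ i0 * poly P x" for x
  proof -
    have "(\<Sum>i\<le>d. Q i * x ^ i) = (\<Sum>i = i0..d. Q i * x ^ i)"
      by (rule sum.mono_neutral_right) (use assms(5) in auto)
    also have "\<dots> = (\<Sum>j = 0..d - i0. Q (j + i0) * x ^ (j + i0))"
      using assms(1,2) sum.shift_bounds_cl_nat_ivl[of "\<lambda>i. Q i * x ^ i" 0 i0 "d - i0"] by simp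
    also have "\<dots> = x ^ i0 * poly P x"
      by (simp add: P_def poly_sum poly_monom sum_distrib_left atLeast0AtMost power_add algebra_simps)
    finally show ?thesis .
  qed
  have coeff_P: "coeff P j = (if j \<le> d - i0 then Q (i0 + j) else 0)" for j
    by (simp add: P_def coeff_sum coeff_monom)
  have "poly P 0 \<noteq> 0"
    using coeff_P[of 0] assms(3) by (simp add: poly_0_coeff_0)
  then have "P \<noteq> 0"
    by auto
  have "i1 - i0 \<le> degree P"
    using coeff_P[of "i1 - i0"] assms(1,2,4) by (intro le_degree) simp
  then have "\<not> constant (poly P)"
    using assms(1) by (simp add: constant_degree)
  then obtain z where "poly P z = 0"
    using fundamental_theorem_of_algebra by blast
  define Z where "Z = {x. poly P x = 0}"
  have "finite Z" and "Z \<noteq> {}"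
    using poly_roots_finite[OF \<open>P \<noteq> 0\<close>] \<open>poly P z = 0\<close> by (auto simp: Z_def)
  then have "Min (norm ` Z) \<in> norm ` Z"
    by (intro Min_in) auto
  then obtain c where "c \<in> Z" and "norm c = Min (norm ` Z)"
    by (metis imageE)
  then have c_min: "norm c \<le> norm x" if "x \<in> Z" for x
    using \<open>finite Z\<close> that by simp
  show ?thesis
  proof (rule that)
    show "c \<noteq> 0"
      using \<open>c \<in> Z\<close> \<open>poly P 0 \<noteq> 0\<close> by (auto simp: Z_def)
    show "(\<Sum>i\<le>d. Q i * c ^ i) = 0"
      using \<open>c \<in> Z\<close> by (simp add: P_eval Z_def)
    show "(\<Sum>i\<le>d. Q i * x ^ i) \<noteq> 0" if "x \<noteq> 0" "norm x < norm c" for x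
      using that c_min[of x] by (auto simp: P_eval Z_def)
  qed
qed



text \<open>Given \<open>L = \<Phi>\<^sup>d + \<Sum>\<^sub>i\<^sub><\<^sub>d a\<^sub>i \<Phi>\<^sup>i\<close>, take \<open>t/n\<close> the slope of the first edge of its Newton polygon and \<open>c\<close> a
  root of minimal modulus of the edge polynomial; then \<open>L g = 0\<close> has a nonzero solution \<open>g\<close> in \<open>E(c z\<^bsup>t/n\<^esup>)\<close>.
  Minimality of \<open>|c|\<close> and \<open>|q\<^bsup>K/n\<^esup>| < 1\<close> make the coefficient recursion for \<open>g\<close> solvable.\<close>

lemma exists_E_solution:
  assumes \<tau>: "Im \<tau> > 0" and nonzero: "\<exists>i<d. a i \<noteq> 0"
  obtains t n c g where "n \<ge> 1" and "coprime t (int n)" and "c \<noteq> 0" and "g \<noteq> 0"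
    and "(E_Phi \<tau> t n c ^^ d) g + (\<Sum>i<d. E_scale n (a i) ((E_Phi \<tau> t n c ^^ i) g)) = 0"
proof -
  define b where "b i = (if i < d then a i else 1)" for i
  have "b d \<noteq> 0" and "\<exists>i<d. b i \<noteq> 0"
    using nonzero by (auto simp: b_def)
  obtain t n i0 i1 \<omega> where n: "n \<ge> 1" and cop: "coprime t (int n)" and i01: "i0 < i1" "i1 \<le> d"
    and b_i0: "b i0 \<noteq> 0" and b_i1: "b i1 \<noteq> 0" and below_i0: "\<forall>i<i0. b i = 0"
    and \<omega>_i0: "\<omega> = int n * fls_subdegree (b i0) + t * int i0"
    and \<omega>_i1: "\<omega> = int n * fls_subdegree (b i1) + t * int i1"
    and above: "\<forall>i\<le>d. b i \<noteq> 0 \<longrightarrow> int n * fls_subdegree (b i) + t * int i \<ge> \<omega>"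
    by (rule newton_polygon_first_edge[OF \<open>b d \<noteq> 0\<close> \<open>\<exists>i<d. b i \<noteq> 0\<close>])
  define Q where "Q i =
      (if int n dvd (\<omega> - t * int i) then b i $$ ((\<omega> - t * int i) div int n) else 0) *
      E_module.qprod \<tau> t n i" for i
  have Q_nonzero: "Q i \<noteq> 0" if "b i \<noteq> 0" "\<omega> = int n * fls_subdegree (b i) + t * int i" for i
    using that n E_module.qprod_nonzero[of n 1] by (simp add: Q_def E_module_def)
  have Q_below: "Q i = 0" if "i < i0" for i
    using below_i0 that by (simp add: Q_def)
  obtain c where c: "c \<noteq> 0" and root: "(\<Sum>i\<le>d. Q i * c ^ i) = 0"
    and minimal: "\<And>x. x \<noteq> 0 \<Longrightarrow> norm x < norm c \<Longrightarrow> (\<Sum>i\<le>d. Q i * x ^ i) \<noteq> 0"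
    using exists_root_of_minimal_modulus[OF i01 Q_nonzero[OF b_i0 \<omega>_i0] Q_nonzero[OF b_i1 \<omega>_i1]
        Q_below] by metis
  interpret E_module \<tau> t n c
    using n c by unfold_locales
  define F where "F i = emb n (b i) * (\<Phi>\<^sub>E ^^ i) 1" for i
  have F_below: "F i $$ m = 0" if "i \<le> d" and "m < \<omega>" for i m
    unfolding F_def using above that by (intro emb_mult_Phi_power_1_nth_below) auto
  have F_\<omega>: "F i $$ \<omega> = Q i * c ^ i" for i
    by (simp add: F_def emb_mult_Phi_power_1_nth Q_def)
  obtain g where "g \<noteq> 0" and "(\<Sum>i\<le>d. F i * fls_twist (\<lambda>j. qchar \<tau> n j ^ i) g) = 0"
  proof (rule exists_twisted_sum_eq_0[OF F_below])
    show "(\<Sum>i\<le>d. F i $$ \<omega> * qchar \<tau> n 0 ^ i) = 0"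
      using root by (simp add: F_\<omega> qchar_def)
    show "(\<Sum>i\<le>d. F i $$ \<omega> * qchar \<tau> n (int K) ^ i) \<noteq> 0" if "K \<ge> 1" for K
    proof -
      have "norm (c * qchar \<tau> n (int K)) < norm c"
        using norm_qchar_less_1[OF \<tau> n, of "int K"] that c qchar_nonzero by (simp add: norm_mult)
      then have "(\<Sum>i\<le>d. Q i * (c * qchar \<tau> n (int K)) ^ i) \<noteq> 0"
        using c qchar_nonzero by (intro minimal) simp_all
      then show ?thesis
        by (simp add: F_\<omega> power_mult_distrib mult.assoc)
    qed
  qed
  then show ?thesis
    using that n cop c by (simp add: difference_operator_eq_twisted_sum F_def b_def)
qed

section \<open>Classification of irreducible difference modules\<close>

lemma exists_shift_into_annulus:
  assumes \<tau>: "Im \<tau> > 0" and n: "n \<ge> 1" and c: "c \<noteq> 0"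
  obtains k where "exp (- 2 * pi * Im \<tau>) < norm ((c / qchar \<tau> n k) ^ n)"
    and "norm ((c / qchar \<tau> n k) ^ n) \<le> 1"
proof -
  define L where "L = 2 * pi * Im \<tau>"
  have "L > 0"
    using \<tau> by (simp add: L_def)
  define k where "k = \<lfloor>- ln (norm c ^ n) / L\<rfloor>"
  have "norm ((c / qchar \<tau> n k) ^ n) = norm c ^ n / exp (- L * of_int k)"
    using n by (simp add: norm_power norm_divide power_divide norm_qchar_power_self L_def)
  also have "\<dots> = exp (ln (norm c ^ n) + L * of_int k)"
    using c by (simp add: exp_add exp_minus field_simps)
  finally have norm_eq: "norm ((c / qchar \<tau> n k) ^ n) = exp (ln (norm c ^ n) + L * of_int k)" .
  have "L * of_int k \<le> - ln (norm c ^ n)" and "- ln (norm c ^ n) < L * of_int k + L"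
    using \<open>L > 0\<close> floor_divide_lower[of L "- ln (norm c ^ n)"] floor_divide_upper[of L "- ln (norm c ^ n)"]
    by (simp_all add: k_def algebra_simps)
  then show ?thesis
    using that[of k] by (simp add: norm_eq L_def)
qed

text \<open>Any \<open>e \<noteq> 0\<close> is a cyclic vector, annihilated by some \<open>L\<close>; a solution of \<open>L g = 0\<close> in some
  \<open>E(c z\<^bsup>t/n\<^esup>)\<close> gives a nonzero morphism, an isomorphism by Schur's lemma, and a shift by \<open>z\<^bsup>k/n\<^esup>\<close>
  moves \<open>|c\<^bsup>n\<^esup>|\<close> into \<open>(|q|, 1]\<close>.\<close>

lemma irreducible_diff_module_iso_E:
  fixes sc :: "complex fls \<Rightarrow> 'b::ab_group_add \<Rightarrow> 'b"
  assumes \<tau>: "Im \<tau> > 0" and dm: "diff_module (phiK \<tau>) sc \<Phi>" and irr: "irreducible_dm sc \<Phi>"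
  shows "\<exists>t n c. n \<ge> 1 \<and> coprime t (int n) \<and>
    exp (- 2 * pi * Im \<tau>) < norm (c ^ n) \<and> norm (c ^ n) \<le> 1 \<and>
    diff_iso sc \<Phi> (E_scale n) (E_Phi \<tau> t n c)"
proof -
  obtain e :: 'b where "e \<noteq> 0"
    using irr unfolding irreducible_dm_def by blast
  then obtain d a where d: "d \<ge> 1" and basis: "iterates_basis sc \<Phi> e d"
    and rel: "(\<Phi> ^^ d) e + (\<Sum>i<d. sc (a i) ((\<Phi> ^^ i) e)) = 0"
    using irreducible_diff_module_iterates_basis[OF dm irr] by blast
  have "\<exists>i<d. a i \<noteq> 0"
  proof (rule ccontr)
    interpret vector_space sc
      using diff_moduleD(1)[OF dm] .
    assume "\<not> (\<exists>i<d. a i \<noteq> 0)"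
    then have "(\<Phi> ^^ d) e = 0"
      using rel by simp
    moreover have "(\<Phi> ^^ d) 0 = 0"
      by (induction d) (simp_all add: diff_moduleD(6)[OF dm])
    ultimately show False
      using \<open>e \<noteq> 0\<close> inj_fn[OF bij_is_inj[OF diff_moduleD(3)[OF dm]], of d] by (metis injD)
  qed
  then obtain t n c g where n: "n \<ge> 1" and cop: "coprime t (int n)" and c: "c \<noteq> 0"
    and "g \<noteq> 0" and rel_g: "(E_Phi \<tau> t n c ^^ d) g + (\<Sum>i<d. E_scale n (a i) ((E_Phi \<tau> t n c ^^ i) g)) = 0"
    by (rule exists_E_solution[OF \<tau>])
  interpret E_module \<tau> t n c
    using n c by unfold_locales
  obtain h where lin: "Vector_Spaces.linear sc (E_scale n) h" and comm: "\<And>m. h (\<Phi> m) = \<Phi>\<^sub>E (h m)"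
    and "h e = g"
    using diff_hom_from_iterates_basis[OF dm diff_module_E basis d rel rel_g] by metis
  have iso: "diff_iso sc \<Phi> (E_scale n) \<Phi>\<^sub>E"
    using diff_iso_if_irreducible[OF dm diff_module_E irr irreducible_E[OF cop] lin comm, of e]
      \<open>h e = g\<close> \<open>g \<noteq> 0\<close> by simp
  obtain k where k: "exp (- 2 * pi * Im \<tau>) < norm ((c / qchar \<tau> n k) ^ n)"
    "norm ((c / qchar \<tau> n k) ^ n) \<le> 1"
    by (rule exists_shift_into_annulus[OF \<tau> n c])
  have "diff_iso sc \<Phi> (E_scale n) (E_Phi \<tau> t n (c / qchar \<tau> n k))"
    using iso diff_iso_shift by (rule diff_iso_trans)
  with k n cop show ?thesis
    by blast
qed

lemma diff_iso_iterate_eq_scale: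
  assumes "diff_iso s1 P1 s2 P2" and "x \<noteq> 0" and "(P1 ^^ k) x = s1 a x"
  obtains g where "g \<noteq> 0" and "(P2 ^^ k) g = s2 a g"
proof -
  obtain h where "bij h" and lin: "Vector_Spaces.linear s1 s2 h" and comm: "\<forall>m. h (P1 m) = P2 (h m)"
    using assms(1) unfolding diff_iso_def by blast
  interpret h: Vector_Spaces.linear s1 s2 h
    by (rule lin)
  have "h x \<noteq> 0"
  proof
    assume "h x = 0"
    then have "h x = h 0"
      by (simp add: h.zero)
    with bij_is_inj[OF \<open>bij h\<close>] have "x = 0"
      by (rule injD)
    with assms(2) show False ..
  qed
  moreover have "(P2 ^^ k) (h x) = s2 a (h x)"
    using comm diff_hom_iterate_eq_scale[of h P1 P2, OF _ lin assms(3)] by blast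
  ultimately show ?thesis
    by (rule that)
qed

text \<open>Valuations in \<open>\<Phi>\<^bsup>nn'\<^esup>\<close> give \<open>t/n = t'/n'\<close>, and both fractions are reduced.\<close>

lemma diff_iso_E_slope_unique:
  assumes n: "n \<ge> 1" "n' \<ge> 1" and c: "c \<noteq> 0" "c' \<noteq> 0"
    and cop: "coprime t (int n)" "coprime t' (int n')"
    and iso: "diff_iso (E_scale n) (E_Phi \<tau> t n c) (E_scale n') (E_Phi \<tau> t' n' c')"
  shows "t = t' \<and> n = n'"
proof -
  interpret E1: E_module \<tau> t n c
    using n c by unfold_locales
  interpret E2: E_module \<tau> t' n' c'
    using n c by unfold_locales
  define A where "A = fls_const (c ^ (n * n') * E1.qprod (n * n')) * fls_X_intpow (t * int n')"
  obtain g where "g \<noteq> 0" and g: "(E2.\<Phi>\<^sub>E ^^ (n * n')) g = E_scale n' A g"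
    using E1.Phi_power_1_scale[of n'] unfolding A_def[symmetric]
    by (rule diff_iso_iterate_eq_scale[OF iso one_neq_zero])
  have "A \<noteq> 0" and "fls_subdegree A = t * int n'"
    using c E1.qprod_nonzero
    by (simp_all add: A_def fls_mult_fls_X_intpow_nonzero fls_subdegree_mult_fls_X_intpow)
  then have "fls_subdegree (E_scale n' A g) = int n' * (t * int n') + fls_subdegree g"
    using \<open>g \<noteq> 0\<close> n by (simp add: E_scale_def fls_subdegree_emb emb_eq_0_iff)
  moreover have "fls_subdegree ((E2.\<Phi>\<^sub>E ^^ (n * n')) g) = t' * int (n * n') + fls_subdegree g"
    by (rule E2.Phi_power_subdegree[OF \<open>g \<noteq> 0\<close>])
  ultimately have "int n' * (t * int n') = int n' * (t' * int n)"
    using g by (simp add: algebra_simps)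
  then have tn: "t * int n' = t' * int n"
    using n by simp
  have "int n dvd t * int n'"
    unfolding tn by simp
  moreover have "int n' dvd t' * int n"
    unfolding tn[symmetric] by simp
  ultimately have "int n dvd int n'" and "int n' dvd int n"
    using cop by (simp_all add: coprime_commute coprime_dvd_mult_right_iff)
  then have "n = n'"
    by (simp add: dvd_antisym)
  then show ?thesis
    using tn n by simp
qed

lemma annulus_scaling_unique:
  fixes L x y :: real and v :: int
  assumes "L > 0" and "exp (- L) < x" and "x \<le> 1" and "exp (- L) < y" and "y \<le> 1"
    and x: "x = y * exp (- L * of_int v)"
  shows "v = 0"
proof (rule ccontr)
  have "y > 0"
    using assms(4) exp_gt_zero less_trans by blast
  assume "v \<noteq> 0"
  then consider "v \<ge> 1" | "v \<le> -1"
    by linarith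
  then show False
  proof cases
    case 1
    then have "L \<le> L * of_int v"
      using assms(1) by (simp add: mult_le_cancel_left1)
    then have "x \<le> y * exp (- L)"
      unfolding x using \<open>y > 0\<close> by (intro mult_left_mono) simp_all
    also have "\<dots> \<le> exp (- L)"
      using assms(5) \<open>y > 0\<close> by (intro mult_left_le_one_le) simp_all
    finally show False
      using assms(2) by simp
  next
    case 2
    then have "L * 1 \<le> L * (- of_int v)"
      using assms(1) by (intro mult_left_mono) simp_all
    then have "L \<le> - L * of_int v"
      by simp
    have "1 = exp (- L) * exp L"
      by (simp add: exp_minus)
    also have "\<dots> < y * exp L"
      using assms(4) by simp
    also have "\<dots> \<le> x"
      unfolding x using \<open>y > 0\<close> \<open>L \<le> - L * of_int v\<close> by (intro mult_left_mono) simp_all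
    finally show False
      using assms(3) by simp
  qed
qed

text \<open>Comparing leading coefficients in \<open>\<Phi>'\<^bsup>n\<^esup> g = \<Phi>\<^bsup>n\<^esup>(1) g\<close> gives \<open>c\<^bsup>n\<^esup> = c'\<^bsup>n\<^esup> q\<^bsup>v\<^esup>\<close> with \<open>v = v(g)\<close>;
  the annulus condition forces \<open>v = 0\<close>.\<close>

lemma diff_iso_E_constant_unique:
  assumes \<tau>: "Im \<tau> > 0" and n: "n \<ge> 1" and c: "c \<noteq> 0" "c' \<noteq> 0"
    and iso: "diff_iso (E_scale n) (E_Phi \<tau> t n c) (E_scale n) (E_Phi \<tau> t n c')"
    and annulus: "exp (- 2 * pi * Im \<tau>) < norm (c ^ n)" "norm (c ^ n) \<le> 1"
      "exp (- 2 * pi * Im \<tau>) < norm (c' ^ n)" "norm (c' ^ n) \<le> 1"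
  shows "c ^ n = c' ^ n"
proof -
  interpret E1: E_module \<tau> t n c
    using n c by unfold_locales
  interpret E2: E_module \<tau> t n c'
    using n c by unfold_locales
  define A where "A = fls_const (c ^ n * E1.qprod n) * fls_X_intpow t"
  have "(E1.\<Phi>\<^sub>E ^^ n) 1 = E_scale n A 1"
    using E1.Phi_power_1_scale[of 1] by (simp add: A_def)
  then obtain g where "g \<noteq> 0" and g: "(E2.\<Phi>\<^sub>E ^^ n) g = E_scale n A g"
    by (rule diff_iso_iterate_eq_scale[OF iso one_neq_zero])
  define v where "v = fls_subdegree g"
  have "E_scale n A g $$ (t * int n + v) = c ^ n * E1.qprod n * g $$ v"
    using n by (simp add: A_def E_scale_def emb_mult emb_const emb_X_intpow fls_const_X_intpow_mult_nth)
  moreover have "(E2.\<Phi>\<^sub>E ^^ n) g $$ (t * int n + v) = c' ^ n * E1.qprod n * (qchar \<tau> n v ^ n * g $$ v)"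
    by (subst E2.Phi_power) (simp add: E2.Phi_power_1 fls_const_X_intpow_mult_nth)
  moreover have "g $$ v \<noteq> 0"
    using \<open>g \<noteq> 0\<close> by (simp add: v_def)
  ultimately have cv: "c ^ n = c' ^ n * qpow \<tau> (of_int v)"
    using g E1.qprod_nonzero n by (simp add: qchar_power_self)
  then have "norm (c ^ n) = norm (c' ^ n) * exp (- (2 * pi * Im \<tau>) * of_int v)"
    by (simp add: norm_mult norm_qpow)
  then have "v = 0"
    using \<tau> annulus annulus_scaling_unique[of "2 * pi * Im \<tau>" "norm (c ^ n)" "norm (c' ^ n)" v]
    by simp
  then show ?thesis
    using cv by simp
qed


lemma irreducible_diff_module_iso_E_unique:
  fixes sc :: "complex fls \<Rightarrow> 'b::ab_group_add \<Rightarrow> 'b"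
  assumes \<tau>: "Im \<tau> > 0" and dm: "diff_module (phiK \<tau>) sc \<Phi>"
    and n: "n \<ge> 1" and cop: "coprime t (int n)"
    and annulus: "exp (- 2 * pi * Im \<tau>) < norm (c ^ n)" "norm (c ^ n) \<le> 1"
    and iso: "diff_iso sc \<Phi> (E_scale n) (E_Phi \<tau> t n c)"
    and n': "n' \<ge> 1" and cop': "coprime t' (int n')"
    and annulus': "exp (- 2 * pi * Im \<tau>) < norm (c' ^ n')" "norm (c' ^ n') \<le> 1"
    and iso': "diff_iso sc \<Phi> (E_scale n') (E_Phi \<tau> t' n' c')"
  shows "t = t' \<and> n = n' \<and> c ^ n = c' ^ n'"
proof -
  have "0 < norm (c ^ n)" and "0 < norm (c' ^ n')"
    using less_trans[OF exp_gt_zero annulus(1)] less_trans[OF exp_gt_zero annulus'(1)] .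
  then have "c \<noteq> 0" and "c' \<noteq> 0"
    using n n' by auto
  interpret E_module \<tau> t n c
    using n \<open>c \<noteq> 0\<close> by unfold_locales
  have iso_EE: "diff_iso (E_scale n) (E_Phi \<tau> t n c) (E_scale n') (E_Phi \<tau> t' n' c')"
    using diff_iso_sym[OF diff_moduleD(1)[OF dm] vector_space_E iso] iso' by (rule diff_iso_trans)
  then have "t = t' \<and> n = n'"
    using diff_iso_E_slope_unique[OF n n' \<open>c \<noteq> 0\<close> \<open>c' \<noteq> 0\<close> cop cop'] by blast
  moreover from this have "c ^ n = c' ^ n"
    using diff_iso_E_constant_unique[OF \<tau> n \<open>c \<noteq> 0\<close> \<open>c' \<noteq> 0\<close>] iso_EE annulus annulus' by simp
  ultimately show ?thesis
    by simp
qed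

theorem proposition1p3:
  fixes \<tau> :: complex
  assumes tau: "Im \<tau> > 0"
  defines "q \<equiv> exp (2 * of_real pi * \<i> * \<tau>)"
  shows
    \<comment> \<open>(1) up to isomorphism E depends only on t, n, c^n\<close>
    "(\<forall>(t::int) (n::nat) (c::complex) (c'::complex).
        n \<ge> 1 \<and> coprime t (int n) \<and>
        norm q powr (1 / real n) < norm c \<and> norm c \<le> 1 \<and>
        norm q powr (1 / real n) < norm c' \<and> norm c' \<le> 1 \<and> c ^ n = c' ^ n \<longrightarrow>
        diff_iso (E_scale n) (E_Phi \<tau> t n c) (E_scale n) (E_Phi \<tau> t n c'))
   \<and>
    \<comment> \<open>(2) E is an irreducible difference module of dimension n, pure of slope t/n, End = C\<close>
    (\<forall>(t::int) (n::nat) (c::complex).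
        n \<ge> 1 \<and> coprime t (int n) \<and>
        norm q powr (1 / real n) < norm c \<and> norm c \<le> 1 \<longrightarrow>
        diff_module (phiK \<tau>) (E_scale n) (E_Phi \<tau> t n c) \<and>
        irreducible_dm (E_scale n) (E_Phi \<tau> t n c) \<and>
        vector_space.dim (E_scale n) (UNIV :: complex fls set) = n \<and>
        pure_of_slope (E_scale n) (E_Phi \<tau> t n c) (of_int t / of_nat n) \<and>
        diff_End (E_scale n) (E_Phi \<tau> t n c) = range (\<lambda>a::complex. E_scale n (fls_const a)))
   \<and>
    \<comment> \<open>(3) classification of irreducible difference modules over K\<close>
    (\<forall>(sc :: complex fls \<Rightarrow> 'b::ab_group_add \<Rightarrow> 'b) (\<Phi> :: 'b \<Rightarrow> 'b).
        diff_module (phiK \<tau>) sc \<Phi> \<and> irreducible_dm sc \<Phi> \<longrightarrow>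
        (\<exists>(t::int) (n::nat) (c::complex).
            n \<ge> 1 \<and> coprime t (int n) \<and> norm q < norm (c ^ n) \<and> norm (c ^ n) \<le> 1 \<and>
            diff_iso sc \<Phi> (E_scale n) (E_Phi \<tau> t n c)) \<and>
        (\<forall>(t::int) (n::nat) (c::complex) (t'::int) (n'::nat) (c'::complex).
            n \<ge> 1 \<and> coprime t (int n) \<and> norm q < norm (c ^ n) \<and> norm (c ^ n) \<le> 1 \<and>
            diff_iso sc \<Phi> (E_scale n) (E_Phi \<tau> t n c) \<and>
            n' \<ge> 1 \<and> coprime t' (int n') \<and> norm q < norm (c' ^ n') \<and> norm (c' ^ n') \<le> 1 \<and>
            diff_iso sc \<Phi> (E_scale n') (E_Phi \<tau> t' n' c') \<longrightarrow>
            t = t' \<and> n = n' \<and> c ^ n = c' ^ n'))"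
proof -
  have norm_q: "norm q = exp (- 2 * pi * Im \<tau>)"
    by (simp add: q_def norm_exp_eq_Re)
  have nonzero: "c \<noteq> 0" if "x powr r < norm c" for x r :: real and c :: complex
    using that by auto
  have E_properties:
    "diff_module (phiK \<tau>) (E_scale n) (E_Phi \<tau> t n c) \<and> irreducible_dm (E_scale n) (E_Phi \<tau> t n c) \<and>
     vector_space.dim (E_scale n) (UNIV :: complex fls set) = n \<and>
     pure_of_slope (E_scale n) (E_Phi \<tau> t n c) (of_int t / of_nat n) \<and>
     diff_End (E_scale n) (E_Phi \<tau> t n c) = range (\<lambda>a::complex. E_scale n (fls_const a))"
    if "n \<ge> 1" and "coprime t (int n)" and "c \<noteq> 0" for t n c
  proof -
    interpret E_module \<tau> t n c
      using that by unfold_locales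
    show ?thesis
      using diff_module_E irreducible_E dim_E pure_E diff_End_E[OF tau] that(2) by blast
  qed
  show ?thesis
    unfolding norm_q
    apply (intro conjI)
    subgoal
      using diff_iso_E_if_power_eq nonzero by blast
    subgoal
      using E_properties nonzero by blast
    subgoal
      using irreducible_diff_module_iso_E[OF tau] irreducible_diff_module_iso_E_unique[OF tau] by blast
    done
qed
end
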